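(* Let $n\ge 2$ and $1\le k\le n-1$ be integers, let $K$ be a generalized $k$-intersection body in $\mathbb{R}^n$, let $f$ be an even continuous non-negative function on $K$, and let $\varepsilon>0$. If $$\int_{K\cap H} f\ \le\ \varepsilon\qquad\text{for every } H\in Gr_{n-k},$$ then $$\int_K f\ \le\ \frac{n}{n-k}\, c_{n,k}\, |K|^{k/n}\,\varepsilon .$$
   Context: $Gr_{n-k}$ is the Grassmannian of $(n-k)$-dimensional linear subspaces of $\mathbb{R}^n$; $\int_{K\cap H} f$ denotes the integral of the restriction of $f$ to $K\cap H$ with respect to $(n-k)$-dimensional Lebesgue measure on $H$. $|K|$ denotes $n$-dimensional volume. $B_2^m$ is the Euclidean unit ball in $\mathbb{R}^m$ and $c_{n,k}=|B_2^n|^{\frac{n-k}{n}}/|B_2^{n-k}|$ (one has $c_{n,k}\in(e^{-k/2},1)$). A star body is a compact set $K\subset\mathbb{R}^n$ containing the origin in its interior such that every line through the origin meets the boundary of $K$ in exactly two points different from the origin and whose Minkowski functional $\|x\|_K=\min\{a\ge0: x\in aK\}$ is continuous. For $g\in C(S^{n-1})$ and $H\in Gr_{n-k}$, $R_{n-k}g(H)=\int_{S^{n-1}\cap H} g(x)\,dx$ (integration with respect to the surface measure on the $(n-k-1)$-sphere $S^{n-1}\cap H$). An origin-symmetric star body $K$ in $\mathbb{R}^n$ is a generalized $k$-intersection body if there exists a finite non-negative Borel measure $\nu$ on $Gr_{n-k}$ such that $\int_{S^{n-1}}\|x\|_K^{-k}g(x)\,dx=\int_{Gr_{n-k}}R_{n-k}g(H)\,d\nu(H)$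 for every $g\in C(S^{n-1})$. *)

theory Defs
  imports "HOL-Analysis.Analysis"
begin

definition minkowski_functional :: "(real^'n) set \<Rightarrow> real^'n \<Rightarrow> real" where
  "minkowski_functional K x = Inf {a. a \<ge> 0 \<and> x \<in> (\<lambda>y. a *\<^sub>R y) ` K}"

definition star_body :: "(real^'n) set \<Rightarrow> bool" where
  "star_body K \<longleftrightarrow> compact K \<and> 0 \<in> interior K \<and>
     (\<forall>v. v \<noteq> 0 \<longrightarrow>
        card ({t *\<^sub>R v | t. True} \<inter> frontier K) = 2 \<and> 0 \<notin> frontier K) \<and>
     continuous_on UNIV (minkowski_functional K)"

definition origin_symmetric :: "(real^'n) set \<Rightarrow> bool" where
  "origin_symmetric K \<longleftrightarrow> (\<forall>x. x \<in> K \<longleftrightarrow> - x \<in> K)"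

definition grassmannian :: "nat \<Rightarrow> (real^'n) set set" where
  "grassmannian m = {H. subspace H \<and> dim H = m}"

text \<open>The Grassmannian realised (with its standard topology) as the compact set of
  orthogonal projection matrices of rank m; P corresponds to the subspace range P.\<close>
definition grassmannian_proj :: "nat \<Rightarrow> (real^'n^'n) set" where
  "grassmannian_proj m = {P. transpose P = P \<and> P ** P = P \<and> rank P = m}"

definition proj_subspace :: "real^'n^'n \<Rightarrow> (real^'n) set" where
  "proj_subspace P = range (\<lambda>x. P *v x)"

definition onb_of :: "(real^'n) set \<Rightarrow> nat \<Rightarrow> real^'n" where
  "onb_of H = (SOME b. (\<forall>i<dim H. norm (b i) = 1) \<and>
      (\<forall>i<dim H. \<forall>j<dim H. i \<noteq> j \<longrightarrow> b i \<bullet> b j = 0) \<and>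
      span (b ` {..<dim H}) = H)"

text \<open>(dim H)-dimensional Lebesgue measure on the subspace H (as a measure on the
  ambient space, concentrated on H): image of Lebesgue measure on R^(dim H) under a
  linear isometry onto H.\<close>
definition subspace_lebesgue :: "(real^'n) set \<Rightarrow> (real^'n) measure" where
  "subspace_lebesgue H =
     distr (PiM {..<dim H} (\<lambda>_. lborel)) borel (\<lambda>c. \<Sum>i<dim H. c i *\<^sub>R onb_of H i)"

text \<open>Surface (area) measure on the unit sphere of an m-dimensional space with
  Lebesgue measure M: the cone-measure construction
  sigma(A) = m * M({t x : x in A, 0 <= t <= 1}), i.e. m times the image of M restricted
  to the unit ball under radial projection.\<close>
definition sphere_measure :: "nat \<Rightarrow> (real^'n) measure \<Rightarrow> (real^'n) measure" where
  "sphere_measure m M =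
     scale_measure (of_nat m)
       (distr (density M (indicator (cball 0 1))) borel (\<lambda>x. inverse (norm x) *\<^sub>R x))"

definition spherical_radon :: "(real^'n \<Rightarrow> real) \<Rightarrow> (real^'n) set \<Rightarrow> real" where
  "spherical_radon g H = (\<integral>x. g x \<partial>(sphere_measure (dim H) (subspace_lebesgue H)))"

definition generalized_k_intersection_body :: "nat \<Rightarrow> (real^'n) set \<Rightarrow> bool" where
  "generalized_k_intersection_body k K \<longleftrightarrow>
     star_body K \<and> origin_symmetric K \<and>
     (\<exists>\<nu> :: (real^'n^'n) measure.
        sets \<nu> = sets borel \<and> finite_measure \<nu> \<and>
        emeasure \<nu> (UNIV - grassmannian_proj (CARD('n) - k)) = 0 \<and>
        (\<forall>g. continuous_on (sphere 0 1) g \<longrightarrow>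
           (\<integral>x. minkowski_functional K x powr (- real k) * g x
               \<partial>(sphere_measure CARD('n) lborel))
           = (\<integral>P. spherical_radon g (proj_subspace P) \<partial>\<nu>)))"

definition c_const :: "nat \<Rightarrow> nat \<Rightarrow> real" where
  "c_const n k = unit_ball_vol (real n) powr (real (n - k) / real n) / unit_ball_vol (real (n - k))"

end

theory Submission
  imports Defs
begin

(* In polar coordinates \<integral>\<^sub>K f = \<integral>\<^sub>S \<integral>\<^sub>0^\<rho>(\<theta>) r^(n-1) f(r\<theta>) dr d\<theta>, where \<rho> = 1/\<parallel>\<cdot>\<parallel>\<^sub>K is the
   radial function of K. Bounding r^k by \<rho>(\<theta>)^k gives \<integral>\<^sub>K f \<le> \<integral>\<^sub>S \<parallel>\<theta>\<parallel>\<^sub>K^(-k) g(\<theta>) d\<theta> with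
   g(\<theta>) = \<integral>\<^sub>0^\<rho>(\<theta>) r^(n-k-1) f(r\<theta>) dr, and polar coordinates inside H \<in> Gr\<^sub>n\<^sub>-\<^sub>k show that the
   spherical Radon transform of g at H is \<integral>\<^bsub>K \<inter> H\<^esub> f \<le> \<epsilon>. So the defining identity of a generalized
   k-intersection body yields \<integral>\<^sub>K f \<le> \<epsilon> \<nu>(Gr\<^sub>n\<^sub>-\<^sub>k). The same identity for g = 1 gives
   \<nu>(Gr\<^sub>n\<^sub>-\<^sub>k) (n-k) |B\<^sup>n\<^sup>-\<^sup>k| = \<integral>\<^sub>S \<rho>^k, and Hoelder's inequality with exponents n/k and n/(n-k),
   together with \<integral>\<^sub>S \<rho>^n = n|K| and |S\<^sup>n\<^sup>-\<^sup>1| = n|B\<^sup>n|, turns this into the stated bound. *)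

definition polar_weight :: "nat \<Rightarrow> 'a::real_normed_vector \<Rightarrow> real \<Rightarrow> ennreal" where
  "polar_weight m x s = ennreal (m * norm x ^ m / s ^ (m + 1)) * indicator {norm x..} s"

lemma nn_integral_polar_weight:
  fixes x :: "'a::real_normed_vector"
  assumes x: "x \<noteq> 0" and m: "m \<ge> 1"
  shows "(\<integral>\<^sup>+s. polar_weight m x s \<partial>lborel) = 1"
proof -
  define a where "a = norm x"
  have a: "a > 0" using x by (simp add: a_def)
  have "(\<integral>\<^sup>+s\<in>{a..}. ennreal (m * a^m / s^(m+1)) \<partial>lborel) = ennreal (0 - (- (a^m / a^m)))"
  proof (rule nn_integral_FTC_atLeast[where F="\<lambda>s. - (a^m / s^m)" and T=0])
    show "(\<lambda>s. m * a^m / s^(m+1)) \<in> borel_measurable borel" by measurable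
    fix s assume s: "a \<le> s"
    then have sp: "s > 0" using a by linarith
    show "0 \<le> m * a^m / s^(m+1)" using sp a by simp
    show "((\<lambda>s. - (a^m / s^m)) has_real_derivative m * a^m / s^(m+1)) (at s)"
      using sp
      apply (auto intro!: derivative_eq_intros simp: power_eq_0_iff)
      apply (cases m) using m apply simp
      apply (simp add: field_simps power_Suc)
      done
  next
    have "((\<lambda>s::real. a^m / s^m) \<longlongrightarrow> 0) at_top"
      using m by (intro tendsto_divide_0[OF tendsto_const] filterlim_at_top_imp_at_infinity
          filterlim_pow_at_top filterlim_ident) auto
    then show "((\<lambda>s. - (a^m / s^m)) \<longlongrightarrow> 0) at_top" using tendsto_minus by fastforce
  qed
  then show ?thesis using a by (simp add: polar_weight_def a_def mult.commute)
qed

lemma nn_integral_polar_weight_rescale: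
  fixes M :: "(real^'n) measure" and F :: "real^'n \<Rightarrow> ennreal"
  assumes sets: "sets M = sets borel"
    and scale: "\<And>s G. s > 0 \<Longrightarrow> G \<in> borel_measurable borel \<Longrightarrow>
        (\<integral>\<^sup>+x. G x \<partial>M) = ennreal (s^m) * (\<integral>\<^sup>+y. G (s *\<^sub>R y) \<partial>M)"
    and F[measurable]: "F \<in> borel_measurable borel" and m: "m \<ge> 1"
  shows "(\<integral>\<^sup>+x. F x * polar_weight m x s \<partial>M) =
    (\<integral>\<^sup>+y. ennreal (s^(m-1)) * indicator {0<..} s *
        (F (s *\<^sub>R y) * ennreal (m * norm y ^ m) * indicator (cball 0 1) y) \<partial>M)"
proof (cases "s > 0")
  case True
  have [measurable_cong]: "sets M = sets borel" by (rule sets)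
  have [measurable]: "(\<lambda>x. polar_weight m x s) \<in> borel_measurable (borel :: (real^'n) measure)"
    unfolding polar_weight_def indicator_def atLeast_iff by measurable
  have "(\<integral>\<^sup>+x. F x * polar_weight m x s \<partial>M)
      = ennreal (s^m) * (\<integral>\<^sup>+y. F (s *\<^sub>R y) * polar_weight m (s *\<^sub>R y) s \<partial>M)"
    by (rule scale[OF True]) measurable
  also have "\<dots> = (\<integral>\<^sup>+y. ennreal (s^m) * (F (s *\<^sub>R y) * polar_weight m (s *\<^sub>R y) s) \<partial>M)"
    by (rule nn_integral_cmult[symmetric]) measurable
  also have "\<dots> = (\<integral>\<^sup>+y. ennreal (s^(m-1)) * indicator {0<..} s *
      (F (s *\<^sub>R y) * ennreal (m * norm y ^ m) * indicator (cball 0 1) y) \<partial>M)"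
  proof (rule nn_integral_cong)
    fix y :: "real^'n"
    have "s * norm y \<le> s \<longleftrightarrow> norm y \<le> 1" using True by (simp add: mult_le_cancel_left1)
    moreover have E: "ennreal (s^m) * ennreal (m * (s * norm y) ^ m / s^(m+1))
        = ennreal (s^(m-1)) * ennreal (m * norm y ^ m)"
    proof -
      have "s^m * (m * (s * norm y) ^ m / s^(m+1)) = s^(m-1) * (m * norm y ^ m)"
        using True m by (cases m) (auto simp: field_simps power_mult_distrib)
      then show ?thesis using True by (simp add: ennreal_mult[symmetric])
    qed
    ultimately show "ennreal (s^m) * (F (s *\<^sub>R y) * polar_weight m (s *\<^sub>R y) s)
        = ennreal (s^(m-1)) * indicator {0<..} s *
          (F (s *\<^sub>R y) * ennreal (m * norm y ^ m) * indicator (cball 0 1) y)"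
      using True unfolding polar_weight_def
      apply (auto simp: indicator_def abs_of_pos dist_norm)
      by (metis E mult.left_commute power_Suc add.commute plus_1_eq_Suc)
  qed
  finally show ?thesis .
next
  case False
  have "polar_weight m x s = 0" for x :: "real^'n"
  proof (cases "x = 0")
    case True then show ?thesis using m by (simp add: polar_weight_def power_0_left)
  next
    case False
    then have "\<not> norm x \<le> s" using \<open>\<not> s > 0\<close> by (metis norm_ge_zero norm_le_zero_iff order_trans not_less)
    then show ?thesis by (simp add: polar_weight_def)
  qed
  then show ?thesis using False by simp
qed

lemma nn_integral_ray_rescale:
  fixes F :: "real^'n \<Rightarrow> ennreal" and y :: "real^'n"
  assumes F[measurable]: "F \<in> borel_measurable borel" and y: "y \<noteq> 0" and m: "m \<ge> 1"
  shows "(\<integral>\<^sup>+r. ennreal (r^(m-1)) * indicator {0<..} r * F (r *\<^sub>R (inverse (norm y) *\<^sub>R y)) \<partial>lborel)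
    = ennreal (norm y ^ m) * (\<integral>\<^sup>+s. ennreal (s^(m-1)) * indicator {0<..} s * F (s *\<^sub>R y) \<partial>lborel)"
    (is "?L = _")
proof -
  have ny: "norm y > 0" using y by simp
  have "?L = ennreal (norm y) * (\<integral>\<^sup>+s. ennreal ((0 + norm y * s)^(m-1)) * indicator {0<..} (0 + norm y * s)
      * F ((0 + norm y * s) *\<^sub>R (inverse (norm y) *\<^sub>R y)) \<partial>lborel)"
    using ny by (subst nn_integral_real_affine[of _ "norm y" 0]) auto
  also have "\<dots> = ennreal (norm y) * (\<integral>\<^sup>+s. ennreal (norm y ^ (m-1)) *
      (ennreal (s^(m-1)) * indicator {0<..} s * F (s *\<^sub>R y)) \<partial>lborel)"
  proof -
    have "ennreal ((0 + norm y * s)^(m-1)) * indicator {0<..} (0 + norm y * s)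
        * F ((0 + norm y * s) *\<^sub>R (inverse (norm y) *\<^sub>R y))
      = ennreal (norm y ^ (m-1)) * (ennreal (s^(m-1)) * indicator {0<..} s * F (s *\<^sub>R y))" for s
    proof (cases "s > 0")
      case True
      have "ennreal ((norm y * s)^(m-1)) = ennreal (norm y ^ (m-1)) * ennreal (s^(m-1))"
        using True ny by (simp add: ennreal_mult[symmetric] power_mult_distrib)
      moreover have "0 < norm y * s" using True ny by simp
      ultimately show ?thesis using True ny by (simp add: mult_ac)
    next
      case False
      then have "\<not> 0 < norm y * s" using ny by (simp add: zero_less_mult_iff)
      then show ?thesis using False by simp
    qed
    then show ?thesis by simp
  qed
  also have "\<dots> = ennreal (norm y ^ m) * (\<integral>\<^sup>+s. ennreal (s^(m-1)) * indicator {0<..} s * F (s *\<^sub>R y) \<partial>lborel)"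
  proof -
    have "ennreal (norm y) * ennreal (norm y ^ (m-1)) = ennreal (norm y ^ m)"
      using m by (cases m) (auto simp: ennreal_mult[symmetric])
    then show ?thesis by (subst nn_integral_cmult) (auto simp: mult.assoc[symmetric])
  qed
  finally show ?thesis .
qed

lemma nn_integral_sphere_measure:
  fixes M :: "(real^'n) measure" and G :: "real^'n \<Rightarrow> ennreal"
  assumes sets: "sets M = sets borel" and G[measurable]: "G \<in> borel_measurable borel"
  shows "(\<integral>\<^sup>+\<theta>. G \<theta> \<partial>sphere_measure m M) =
    (\<integral>\<^sup>+y. ennreal m * (indicator (cball 0 1) y * G (inverse (norm y) *\<^sub>R y)) \<partial>M)"
proof -
  have [measurable_cong]: "sets M = sets borel" by (rule sets)
  have [measurable]: "cball (0::real^'n) 1 \<in> sets borel" by simp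
  have "(\<integral>\<^sup>+\<theta>. G \<theta> \<partial>sphere_measure m M) = of_nat m *
      (\<integral>\<^sup>+\<theta>. G \<theta> \<partial>distr (density M (indicator (cball 0 1))) borel (\<lambda>x. inverse (norm x) *\<^sub>R x))"
    unfolding sphere_measure_def by (rule nn_integral_scale_measure) simp
  also have "\<dots> = of_nat m * (\<integral>\<^sup>+y. G (inverse (norm y) *\<^sub>R y) \<partial>density M (indicator (cball 0 1)))"
    by (subst nn_integral_distr) auto
  also have "\<dots> = of_nat m * (\<integral>\<^sup>+y. indicator (cball 0 1) y * G (inverse (norm y) *\<^sub>R y) \<partial>M)"
    by (subst nn_integral_density) auto
  also have "\<dots> = (\<integral>\<^sup>+y. ennreal m * (indicator (cball 0 1) y * G (inverse (norm y) *\<^sub>R y)) \<partial>M)"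
    by (subst nn_integral_cmult) (auto simp: ennreal_of_nat_eq_real_of_nat)
  finally show ?thesis .
qed

(* Inserting the factor
   1 = \<integral> polar_weight m x s ds and exchanging the order of integration twice reduces the
   formula to the scaling law of M. *)
lemma nn_integral_polar:
  fixes M :: "(real^'n) measure" and F :: "real^'n \<Rightarrow> ennreal"
  assumes sets: "sets M = sets borel" and sf: "sigma_finite_measure M" and m: "m \<ge> 1"
    and scale: "\<And>s G. s > 0 \<Longrightarrow> G \<in> borel_measurable borel \<Longrightarrow>
        (\<integral>\<^sup>+x. G x \<partial>M) = ennreal (s^m) * (\<integral>\<^sup>+y. G (s *\<^sub>R y) \<partial>M)"
    and zero: "emeasure M {0} = 0"
    and F[measurable]: "F \<in> borel_measurable borel"
  shows "(\<integral>\<^sup>+x. F x \<partial>M) = (\<integral>\<^sup>+\<theta>. (\<integral>\<^sup>+r. ennreal (r^(m-1)) * indicator {0<..} r * F (r *\<^sub>R \<theta>) \<partial>lborel)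
      \<partial>sphere_measure m M)"
proof -
  interpret sigma_finite_measure M by (rule sf)
  interpret P: pair_sigma_finite M lborel
    by (simp add: pair_sigma_finite_def sf lborel.sigma_finite_measure_axioms)
  interpret P2: pair_sigma_finite lborel M
    by (simp add: pair_sigma_finite_def sf lborel.sigma_finite_measure_axioms)
  have [measurable_cong]: "sets M = sets borel" by (rule sets)
  have [measurable]: "cball (0::real^'n) 1 \<in> sets borel" by simp
  define G where "G \<theta> = (\<integral>\<^sup>+r. ennreal (r^(m-1)) * indicator {0<..} r * F (r *\<^sub>R \<theta>) \<partial>lborel)"
    for \<theta> :: "real^'n"
  define H where "H s y = ennreal (s^(m-1)) * indicator {0<..} s *
      (F (s *\<^sub>R y) * ennreal (m * norm y ^ m) * indicator (cball 0 1) y)" for s and y :: "real^'n"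
  have [measurable]: "(\<lambda>(x, s). polar_weight m x s) \<in> borel_measurable (borel \<Otimes>\<^sub>M borel)"
    unfolding polar_weight_def indicator_def atLeast_iff by measurable
  have [measurable]: "G \<in> borel_measurable borel"
    unfolding G_def by (rule lborel.borel_measurable_nn_integral) measurable
  have [measurable]: "(\<lambda>(s, y). H s y) \<in> borel_measurable (borel \<Otimes>\<^sub>M borel)"
    unfolding H_def by measurable
  have AE0: "AE x in M. x \<noteq> 0"
    by (rule AE_I'[of "{0}"]) (auto simp: null_sets_def zero sets)
  have "(\<integral>\<^sup>+x. F x \<partial>M) = (\<integral>\<^sup>+x. F x * (\<integral>\<^sup>+s. polar_weight m x s \<partial>lborel) \<partial>M)"
    using AE0 by (intro nn_integral_cong_AE) (auto elim!: eventually_mono simp: nn_integral_polar_weight[OF _ m])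
  also have "\<dots> = (\<integral>\<^sup>+x. (\<integral>\<^sup>+s. F x * polar_weight m x s \<partial>lborel) \<partial>M)"
    by (rule nn_integral_cong) (simp add: nn_integral_cmult)
  also have "\<dots> = (\<integral>\<^sup>+s. (\<integral>\<^sup>+x. F x * polar_weight m x s \<partial>M) \<partial>lborel)"
    by (rule P.Fubini'[symmetric]) measurable
  also have "\<dots> = (\<integral>\<^sup>+s. (\<integral>\<^sup>+y. H s y \<partial>M) \<partial>lborel)"
    unfolding H_def by (intro nn_integral_cong nn_integral_polar_weight_rescale[OF sets scale F m])
  also have "\<dots> = (\<integral>\<^sup>+y. (\<integral>\<^sup>+s. H s y \<partial>lborel) \<partial>M)"
    by (rule P2.Fubini'[symmetric]) measurable
  also have "\<dots> = (\<integral>\<^sup>+y. ennreal m * (indicator (cball 0 1) y * G (inverse (norm y) *\<^sub>R y)) \<partial>M)"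
  proof (rule nn_integral_cong_AE)
    show "AE y in M. (\<integral>\<^sup>+s. H s y \<partial>lborel) = ennreal m * (indicator (cball 0 1) y * G (inverse (norm y) *\<^sub>R y))"
      using AE0
    proof eventually_elim
      case (elim y)
      have "(\<integral>\<^sup>+s. H s y \<partial>lborel) = (\<integral>\<^sup>+s. (ennreal m * ennreal (norm y ^ m) * indicator (cball 0 1) y) *
          (ennreal (s^(m-1)) * indicator {0<..} s * F (s *\<^sub>R y)) \<partial>lborel)"
        by (rule nn_integral_cong) (simp add: H_def ennreal_mult mult_ac)
      also have "\<dots> = (ennreal m * ennreal (norm y ^ m) * indicator (cball 0 1) y) *
          (\<integral>\<^sup>+s. ennreal (s^(m-1)) * indicator {0<..} s * F (s *\<^sub>R y) \<partial>lborel)"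
        by (rule nn_integral_cmult) measurable
      also have "\<dots> = ennreal m * (indicator (cball 0 1) y * G (inverse (norm y) *\<^sub>R y))"
        unfolding G_def nn_integral_ray_rescale[OF F elim m] by (simp add: mult_ac)
      finally show ?case .
    qed
  qed
  also have "\<dots> = (\<integral>\<^sup>+\<theta>. G \<theta> \<partial>sphere_measure m M)"
    by (rule nn_integral_sphere_measure[symmetric]) (use sets in measurable)
  finally show ?thesis unfolding G_def .
qed

lemma nn_integral_lborel_scaleR:
  fixes G :: "real^'n \<Rightarrow> ennreal" and s :: real
  assumes s: "s > 0" and G[measurable]: "G \<in> borel_measurable borel"
  shows "(\<integral>\<^sup>+x. G x \<partial>lborel) = ennreal (s ^ CARD('n)) * (\<integral>\<^sup>+y. G (s *\<^sub>R y) \<partial>lborel)"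
proof -
  have L: "(lborel :: (real^'n) measure) = density (distr lborel borel (\<lambda>x. s *\<^sub>R x)) (\<lambda>x. ennreal (s ^ CARD('n)))"
    using lborel_affine[of s "0::real^'n"] s by simp
  have "(\<integral>\<^sup>+x. G x \<partial>lborel) = (\<integral>\<^sup>+x. G x \<partial>density (distr lborel borel (\<lambda>x. s *\<^sub>R x)) (\<lambda>x. ennreal (s ^ CARD('n))))"
    by (subst L) (rule refl)
  also have "\<dots> = (\<integral>\<^sup>+x. ennreal (s ^ CARD('n)) * G x \<partial>distr lborel borel (\<lambda>x::real^'n. s *\<^sub>R x))"
    by (rule nn_integral_density) auto
  also have "\<dots> = (\<integral>\<^sup>+y. ennreal (s ^ CARD('n)) * G (s *\<^sub>R y) \<partial>lborel)"
    by (rule nn_integral_distr) auto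
  also have "\<dots> = ennreal (s ^ CARD('n)) * (\<integral>\<^sup>+y. G (s *\<^sub>R y) \<partial>lborel)"
    by (rule nn_integral_cmult) auto
  finally show ?thesis .
qed

lemma PiM_lborel_eq_density_scale:
  fixes I :: "'i set" and s :: real
  assumes I: "finite I" and s: "s > 0"
  shows "PiM I (\<lambda>_. lborel) = density (distr (PiM I (\<lambda>_. lborel)) (PiM I (\<lambda>_. lborel)) (\<lambda>c. restrict (\<lambda>i. s * c i) I)) (\<lambda>_. ennreal (s ^ card I))"
    (is "_ = ?R")
proof -
  interpret product_sigma_finite "\<lambda>_::'i. (lborel::real measure)"
    by standard
  have scm[measurable]: "(\<lambda>c. restrict (\<lambda>i. s * c i) I) \<in> PiM I (\<lambda>_. lborel) \<rightarrow>\<^sub>M PiM I (\<lambda>_. lborel)"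
    by measurable
  show ?thesis
  proof (rule PiM_eqI[symmetric, OF I])
    show "sets ?R = sets (PiM I (\<lambda>_. lborel))" by simp
    fix A assume A: "\<And>i. i \<in> I \<Longrightarrow> A i \<in> sets (lborel::real measure)"
    have pre: "(\<lambda>c. restrict (\<lambda>i. s * c i) I) -` PiE I A \<inter> space (PiM I (\<lambda>_. lborel)) = PiE I (\<lambda>i. (*) s -` A i)"
      by (auto simp: space_PiM PiE_def Pi_def extensional_def restrict_def)
    have A': "(*) s -` A i \<in> sets lborel" if "i \<in> I" for i
      using measurable_sets[of "(*) s" borel borel "A i"] A[OF that] by simp
    have one: "emeasure lborel ((*) s -` A i) = ennreal (1/s) * emeasure lborel (A i)" if "i \<in> I" for i
    proof -
      have "emeasure lborel ((*) s -` A i) = emeasure (distr lborel borel ((*) s)) (A i)"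
        using A[OF that] by (subst emeasure_distr) auto
      also have "\<dots> = emeasure (density lborel (\<lambda>_. ennreal (inverse \<bar>s\<bar>))) (A i)"
        using s by (subst lborel_distr_mult) auto
      also have "\<dots> = ennreal (1/s) * emeasure lborel (A i)"
        using A[OF that] s by (subst emeasure_density_const) (auto simp: divide_inverse)
      finally show ?thesis .
    qed
    have "emeasure ?R (PiE I A) = ennreal (s ^ card I) * emeasure (distr (PiM I (\<lambda>_. lborel)) (PiM I (\<lambda>_. lborel)) (\<lambda>c. restrict (\<lambda>i. s * c i) I)) (PiE I A)"
      using A by (subst emeasure_density_const) (auto intro!: sets_PiM_I_finite I)
    also have "\<dots> = ennreal (s ^ card I) * emeasure (PiM I (\<lambda>_. lborel)) (PiE I (\<lambda>i. (*) s -` A i))"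
      using A by (subst emeasure_distr) (auto intro!: sets_PiM_I_finite I simp: pre)
    also have "\<dots> = ennreal (s ^ card I) * (\<Prod>i\<in>I. ennreal (1/s) * emeasure lborel (A i))"
      using A' I by (subst emeasure_PiM) (auto simp: one)
    also have "\<dots> = ennreal (s ^ card I) * (ennreal (1/s) ^ card I * (\<Prod>i\<in>I. emeasure lborel (A i)))"
      by (simp add: prod.distrib)
    also have "\<dots> = (ennreal (s ^ card I) * ennreal ((1/s) ^ card I)) * (\<Prod>i\<in>I. emeasure lborel (A i))"
      using s by (simp add: ennreal_power mult.assoc)
    also have "ennreal (s ^ card I) * ennreal ((1/s) ^ card I) = 1"
      using s by (simp add: ennreal_mult[symmetric] power_mult_distrib[symmetric])
    finally show "emeasure ?R (PiE I A) = (\<Prod>i\<in>I. emeasure lborel (A i))" by (simp only: mult_1)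
  qed
qed

lemma nn_integral_distr_sum_scaleR:
  fixes G :: "real^'n \<Rightarrow> ennreal" and s :: real and b :: "nat \<Rightarrow> real^'n" and m :: nat
  assumes s: "s > 0" and G[measurable]: "G \<in> borel_measurable borel"
  defines "M \<equiv> distr (PiM {..<m} (\<lambda>_. lborel)) borel (\<lambda>c. \<Sum>i<m. c i *\<^sub>R b i)"
  shows "(\<integral>\<^sup>+x. G x \<partial>M) = ennreal (s ^ m) * (\<integral>\<^sup>+y. G (s *\<^sub>R y) \<partial>M)"
proof -
  let ?P = "PiM {..<m} (\<lambda>_. lborel::real measure)"
  let ?sc = "\<lambda>c. restrict (\<lambda>i. s * c i) {..<m}"
  have Lm[measurable]: "(\<lambda>c. \<Sum>i<m. c i *\<^sub>R b i) \<in> ?P \<rightarrow>\<^sub>M borel" by measurable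
  have scm[measurable]: "?sc \<in> ?P \<rightarrow>\<^sub>M ?P" by measurable
  have "(\<integral>\<^sup>+x. G x \<partial>M) = (\<integral>\<^sup>+c. G (\<Sum>i<m. c i *\<^sub>R b i) \<partial>?P)"
    unfolding M_def by (subst nn_integral_distr) auto
  also have "\<dots> = (\<integral>\<^sup>+c. G (\<Sum>i<m. c i *\<^sub>R b i) \<partial>density (distr ?P ?P ?sc) (\<lambda>_. ennreal (s ^ m)))"
    using PiM_lborel_eq_density_scale[of "{..<m}" s] s by simp
  also have "\<dots> = (\<integral>\<^sup>+c. ennreal (s ^ m) * G (\<Sum>i<m. c i *\<^sub>R b i) \<partial>distr ?P ?P ?sc)"
    by (subst nn_integral_density) auto
  also have "\<dots> = (\<integral>\<^sup>+c. ennreal (s ^ m) * G (\<Sum>i<m. ?sc c i *\<^sub>R b i) \<partial>?P)"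
    by (rule nn_integral_distr[OF scm]) measurable
  also have "\<dots> = (\<integral>\<^sup>+c. ennreal (s ^ m) * G (s *\<^sub>R (\<Sum>i<m. c i *\<^sub>R b i)) \<partial>?P)"
  proof (rule nn_integral_cong)
    fix c show "ennreal (s ^ m) * G (\<Sum>i<m. ?sc c i *\<^sub>R b i) = ennreal (s ^ m) * G (s *\<^sub>R (\<Sum>i<m. c i *\<^sub>R b i))"
      by (simp add: scaleR_sum_right)
  qed
  also have "\<dots> = ennreal (s ^ m) * (\<integral>\<^sup>+c. G (s *\<^sub>R (\<Sum>i<m. c i *\<^sub>R b i)) \<partial>?P)"
    by (subst nn_integral_cmult) auto
  also have "(\<integral>\<^sup>+c. G (s *\<^sub>R (\<Sum>i<m. c i *\<^sub>R b i)) \<partial>?P) = (\<integral>\<^sup>+y. G (s *\<^sub>R y) \<partial>M)"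
    unfolding M_def by (subst nn_integral_distr) auto
  finally show ?thesis .
qed

definition orthonormal_fam :: "nat \<Rightarrow> (nat \<Rightarrow> real^'n) \<Rightarrow> bool" where
  "orthonormal_fam m b \<longleftrightarrow> (\<forall>i<m. norm (b i) = 1) \<and> (\<forall>i<m. \<forall>j<m. i \<noteq> j \<longrightarrow> b i \<bullet> b j = 0)"

lemma onb_of_exists:
  fixes H :: "(real^'n) set"
  assumes "subspace H"
  shows "\<exists>b. (\<forall>i<dim H. norm (b i) = 1) \<and>
      (\<forall>i<dim H. \<forall>j<dim H. i \<noteq> j \<longrightarrow> b i \<bullet> b j = 0) \<and>
      span (b ` {..<dim H}) = H"
proof -
  obtain B where B: "B \<subseteq> H" "pairwise orthogonal B" "\<And>x. x \<in> B \<Longrightarrow> norm x = 1"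
    "independent B" "card B = dim H" "span B = H"
    using orthonormal_basis_subspace[OF assms] by metis
  have fin: "finite B" using B(4) by (rule independent_imp_finite)
  obtain h where h: "bij_betw h {0..<card B} B" using ex_bij_betw_nat_finite[OF fin] by blast
  have hB: "h ` {..<dim H} = B" using h B(5) by (simp add: bij_betw_def atLeast0LessThan)
  have hinj: "inj_on h {..<dim H}" using h B(5) by (simp add: bij_betw_def atLeast0LessThan)
  show ?thesis
  proof (intro exI conjI allI impI)
    fix i assume "i < dim H" then show "norm (h i) = 1" using hB B(3) by blast
  next
    fix i j assume "i < dim H" "j < dim H" "i \<noteq> j"
    then have "h i \<noteq> h j" "h i \<in> B" "h j \<in> B" using hinj hB by (auto dest: inj_onD)
    then show "h i \<bullet> h j = 0" using B(2) by (auto simp: pairwise_def orthogonal_def)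
  next
    show "span (h ` {..<dim H}) = H" using hB B(6) by simp
  qed
qed

lemma onb_of:
  fixes H :: "(real^'n) set"
  assumes "subspace H"
  shows "orthonormal_fam (dim H) (onb_of H)" "span (onb_of H ` {..<dim H}) = H"
  using someI_ex[OF onb_of_exists[OF assms]] unfolding onb_of_def orthonormal_fam_def by auto

lemma norm_sum_orthonormal:
  fixes b :: "nat \<Rightarrow> real^'n"
  assumes "orthonormal_fam m b"
  shows "norm (\<Sum>i<m. c i *\<^sub>R b i) = sqrt (\<Sum>i<m. (c i)\<^sup>2)"
proof -
  have "(\<Sum>i<m. c i *\<^sub>R b i) \<bullet> (\<Sum>i<m. c i *\<^sub>R b i) = (\<Sum>i<m. \<Sum>j<m. c i * c j * (b i \<bullet> b j))"
    by (simp add: inner_sum_left inner_sum_right sum_distrib_left mult_ac inner_commute)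
  also have "\<dots> = (\<Sum>i<m. \<Sum>j<m. if j = i then (c i)\<^sup>2 else 0)"
  proof (intro sum.cong refl)
    fix i j assume "i \<in> {..<m}" "j \<in> {..<m}"
    then show "c i * c j * (b i \<bullet> b j) = (if j = i then (c i)\<^sup>2 else 0)"
      using assms unfolding orthonormal_fam_def
      by (auto simp: power2_eq_square norm_eq_sqrt_inner)
  qed
  also have "\<dots> = (\<Sum>i<m. (c i)\<^sup>2)" by simp
  finally show ?thesis by (simp add: norm_eq_sqrt_inner)
qed

lemma emeasure_distr_orthonormal_cball:
  fixes b :: "nat \<Rightarrow> real^'n"
  assumes ob: "orthonormal_fam m b" and r: "r > 0"
  shows "emeasure (distr (PiM {..<m} (\<lambda>_. lborel)) borel (\<lambda>c. \<Sum>i<m. c i *\<^sub>R b i)) (cball 0 r)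
      = ennreal (unit_ball_vol m * r ^ m)"
proof -
  have "emeasure (distr (PiM {..<m} (\<lambda>_. lborel)) borel (\<lambda>c. \<Sum>i<m. c i *\<^sub>R b i)) (cball 0 r)
      = emeasure (PiM {..<m} (\<lambda>_. lborel)) ((\<lambda>c. \<Sum>i<m. c i *\<^sub>R b i) -` cball 0 r \<inter> space (PiM {..<m} (\<lambda>_. lborel)))"
    by (rule emeasure_distr) auto
  also have "(\<lambda>c. \<Sum>i<m. c i *\<^sub>R b i) -` cball 0 r = {c. sqrt (\<Sum>i\<in>{..<m}. (c i)\<^sup>2) \<le> r}"
    using norm_sum_orthonormal[OF ob] by (auto simp: dist_norm)
  also have "emeasure (PiM {..<m} (\<lambda>_. lborel)) ({c. sqrt (\<Sum>i\<in>{..<m}. (c i)\<^sup>2) \<le> r} \<inter> space (PiM {..<m} (\<lambda>_. lborel)))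
     = ennreal (unit_ball_vol (real (card {..<m})) * r ^ card {..<m})"
    using r by (intro emeasure_cball_aux) auto
  finally show ?thesis by simp
qed

lemma emeasure_distr_orthonormal_singleton_0:
  fixes b :: "nat \<Rightarrow> real^'n"
  assumes ob: "orthonormal_fam m b" and m: "m \<ge> 1"
  shows "emeasure (distr (PiM {..<m} (\<lambda>_. lborel)) borel (\<lambda>c. \<Sum>i<m. c i *\<^sub>R b i)) {0} = 0"
proof -
  have "emeasure (distr (PiM {..<m} (\<lambda>_. lborel)) borel (\<lambda>c. \<Sum>i<m. c i *\<^sub>R b i)) {0}
      = emeasure (PiM {..<m} (\<lambda>_. lborel)) ((\<lambda>c. \<Sum>i<m. c i *\<^sub>R b i) -` {0} \<inter> space (PiM {..<m} (\<lambda>_. lborel)))"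
    by (rule emeasure_distr) auto
  also have "(\<lambda>c. \<Sum>i<m. c i *\<^sub>R b i) -` {0} \<inter> space (PiM {..<m} (\<lambda>_. lborel)) = PiE {..<m} (\<lambda>_. {0})"
  proof -
    have "(\<Sum>i<m. c i *\<^sub>R b i) = 0 \<longleftrightarrow> (\<forall>i<m. c i = 0)" for c
    proof -
      have "(\<Sum>i<m. c i *\<^sub>R b i) = 0 \<longleftrightarrow> (\<Sum>i<m. (c i)\<^sup>2) = 0"
        using norm_sum_orthonormal[OF ob, of c] by (metis norm_eq_zero real_sqrt_eq_zero_cancel_iff)
      also have "\<dots> \<longleftrightarrow> (\<forall>i<m. c i = 0)" by (subst sum_nonneg_eq_0_iff) auto
      finally show ?thesis .
    qed
    then show ?thesis by (auto simp: space_PiM PiE_def extensional_def Pi_def)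
  qed
  also have "emeasure (PiM {..<m} (\<lambda>_. lborel)) (PiE {..<m} (\<lambda>_. {0::real})) = (\<Prod>i<m. emeasure lborel {0::real})"
    by (rule product_sigma_finite.emeasure_PiM) (auto simp: product_sigma_finite_def lborel.sigma_finite_measure_axioms)
  also have "\<dots> = 0" using m by (simp add: emeasure_lborel_countable)
  finally show ?thesis .
qed

lemma sigma_finite_distr_orthonormal:
  fixes b :: "nat \<Rightarrow> real^'n"
  assumes ob: "orthonormal_fam m b"
  shows "sigma_finite_measure (distr (PiM {..<m} (\<lambda>_. lborel)) borel (\<lambda>c. \<Sum>i<m. c i *\<^sub>R b i))"
proof (rule sigma_finite_measure.intro, intro exI conjI)
  let ?M = "distr (PiM {..<m} (\<lambda>_. lborel)) borel (\<lambda>c. \<Sum>i<m. c i *\<^sub>R b i)"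
  show "countable (range (\<lambda>j::nat. cball (0::real^'n) (Suc j)))" by simp
  show "range (\<lambda>j::nat. cball (0::real^'n) (Suc j)) \<subseteq> sets ?M" by auto
  show "\<Union> (range (\<lambda>j::nat. cball (0::real^'n) (Suc j))) = space ?M"
  proof -
    have "\<exists>j::nat. x \<in> cball 0 (Suc j)" for x :: "real^'n"
    proof -
      obtain j :: nat where "norm x \<le> real j" using real_arch_simple by blast
      then show ?thesis by (intro exI[of _ j]) (simp add: dist_norm)
    qed
    then show ?thesis by auto
  qed
  show "\<forall>a\<in>range (\<lambda>j::nat. cball (0::real^'n) (Suc j)). emeasure ?M a \<noteq> \<infinity>"
    using emeasure_distr_orthonormal_cball[OF ob] by auto
qed

lemma sets_subspace_lebesgue[simp, measurable_cong]: "sets (subspace_lebesgue H) = sets borel"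
  by (simp add: subspace_lebesgue_def)

lemma sigma_finite_subspace_lebesgue:
  "subspace H \<Longrightarrow> sigma_finite_measure (subspace_lebesgue H)"
  unfolding subspace_lebesgue_def by (rule sigma_finite_distr_orthonormal[OF onb_of(1)])

lemma nn_integral_subspace_lebesgue_scaleR:
  "s > 0 \<Longrightarrow> G \<in> borel_measurable borel \<Longrightarrow>
    (\<integral>\<^sup>+x. G x \<partial>subspace_lebesgue H) = ennreal (s ^ dim H) * (\<integral>\<^sup>+y. G (s *\<^sub>R y) \<partial>subspace_lebesgue H)"
  unfolding subspace_lebesgue_def by (rule nn_integral_distr_sum_scaleR)

lemma emeasure_subspace_lebesgue_singleton_0:
  "subspace H \<Longrightarrow> dim H \<ge> 1 \<Longrightarrow> emeasure (subspace_lebesgue H) {0} = 0"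
  unfolding subspace_lebesgue_def by (rule emeasure_distr_orthonormal_singleton_0[OF onb_of(1)])

lemma emeasure_subspace_lebesgue_cball:
  "subspace H \<Longrightarrow> emeasure (subspace_lebesgue H) (cball 0 1) = ennreal (unit_ball_vol (dim H))"
  unfolding subspace_lebesgue_def using emeasure_distr_orthonormal_cball[OF onb_of(1), of H 1] by simp

lemma AE_subspace_lebesgue_mem:
  assumes H: "subspace H"
  shows "AE x in subspace_lebesgue H. x \<in> H"
  unfolding subspace_lebesgue_def
proof (subst AE_distr_iff)
  show "(\<lambda>c. \<Sum>i<dim H. c i *\<^sub>R onb_of H i) \<in> PiM {..<dim H} (\<lambda>_. lborel) \<rightarrow>\<^sub>M borel" by measurable
  show "{x \<in> space borel. x \<in> H} \<in> sets borel" using closed_subspace[OF H] by (simp add: borel_closed)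
  have "(\<Sum>i<dim H. c i *\<^sub>R onb_of H i) \<in> span (onb_of H ` {..<dim H})" for c
    by (intro span_sum span_mul span_base) auto
  then show "AE c in PiM {..<dim H} (\<lambda>_. lborel). (\<Sum>i<dim H. c i *\<^sub>R onb_of H i) \<in> H"
    using onb_of(2)[OF H] by (intro AE_I2) blast
qed

lemma sets_sphere_measure[simp, measurable_cong]: "sets (sphere_measure m M) = sets borel"
  by (simp add: sphere_measure_def)

lemma space_sphere_measure[simp]: "space (sphere_measure m M) = UNIV"
  by (metis sets_eq_imp_space_eq sets_sphere_measure space_borel)

lemma emeasure_sphere_measure:
  fixes M :: "(real^'n) measure"
  assumes sets: "sets M = sets borel" and A: "A \<in> sets borel"
  shows "emeasure (sphere_measure m M) A =
    of_nat m * emeasure M (cball 0 1 \<inter> (\<lambda>x. inverse (norm x) *\<^sub>R x) -` A)"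
proof -
  let ?sg = "\<lambda>x::real^'n. inverse (norm x) *\<^sub>R x"
  have sgm: "?sg \<in> density M (indicator (cball 0 1)) \<rightarrow>\<^sub>M borel"
    using sets by (simp add: measurable_cong_sets[OF sets refl])
  have spM: "space M = UNIV" using sets by (metis sets_eq_imp_space_eq space_borel)
  have "emeasure (sphere_measure m M) A =
      of_nat m * emeasure (distr (density M (indicator (cball 0 1))) borel ?sg) A"
    by (simp add: sphere_measure_def)
  also have "emeasure (distr (density M (indicator (cball 0 1))) borel ?sg) A
      = emeasure (density M (indicator (cball 0 1))) (?sg -` A \<inter> space (density M (indicator (cball 0 1))))"
    using A sgm by (intro emeasure_distr) auto
  also have "\<dots> = emeasure M (cball 0 1 \<inter> ?sg -` A)"
  proof -
    have sgb: "?sg \<in> borel_measurable borel" by measurable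
    have "?sg -` A \<in> sets borel" using measurable_sets[OF sgb A] by simp
    then show ?thesis using spM sets by (subst emeasure_restricted) auto
  qed
  finally show ?thesis .
qed

lemma emeasure_sphere_measure_UNIV:
  fixes M :: "(real^'n) measure"
  assumes "sets M = sets borel"
  shows "emeasure (sphere_measure m M) UNIV = of_nat m * emeasure M (cball 0 1)"
  using emeasure_sphere_measure[OF assms, of UNIV m] by simp

lemma AE_sphere_measure_sphere:
  fixes M :: "(real^'n) measure"
  assumes sets: "sets M = sets borel" and zero: "emeasure M {0} = 0"
  shows "AE \<theta> in sphere_measure m M. \<theta> \<in> sphere 0 1"
proof (rule AE_I')
  have "(\<lambda>x::real^'n. inverse (norm x) *\<^sub>R x) -` (UNIV - sphere 0 1) = {0}"
  proof safe
    fix x :: "real^'n" assume "inverse (norm x) *\<^sub>R x \<notin> sphere 0 1"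
    then show "x = 0" by (cases "x = 0") auto
  qed auto
  then have "emeasure (sphere_measure m M) (UNIV - sphere 0 1) = 0"
    using emeasure_sphere_measure[OF sets, of "UNIV - sphere 0 1" m] zero by (simp add: Int_absorb1)
  then show "UNIV - sphere 0 1 \<in> null_sets (sphere_measure m M)" by (simp add: null_sets_def)
qed auto

lemma finite_measure_sphere_measure:
  fixes M :: "(real^'n) measure"
  assumes "sets M = sets borel" and "emeasure M (cball 0 1) \<noteq> \<infinity>"
  shows "finite_measure (sphere_measure m M)"
  using assms by (intro finite_measureI)
    (simp add: emeasure_sphere_measure_UNIV ennreal_of_nat_eq_real_of_nat ennreal_mult_eq_top_iff)

lemma star_body_compact: "star_body K \<Longrightarrow> compact K"
  by (simp add: star_body_def)

lemma star_body_closed: "star_body K \<Longrightarrow> closed K"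
  by (simp add: star_body_compact compact_imp_closed)

lemma star_body_bounded: "star_body K \<Longrightarrow> bounded K"
  by (simp add: star_body_compact compact_imp_bounded)

lemma star_body_0_interior: "star_body K \<Longrightarrow> 0 \<in> interior K"
  by (simp add: star_body_def)

lemma star_body_0_mem: "star_body K \<Longrightarrow> 0 \<in> K"
  using star_body_0_interior interior_subset by blast

lemma star_body_cball_subset:
  assumes "star_body K"
  shows "\<exists>d>0. cball 0 d \<subseteq> K"
proof -
  obtain e where "e > 0" "ball 0 e \<subseteq> K"
    using star_body_0_interior[OF assms] by (metis mem_interior)
  then show ?thesis by (intro exI[of _ "e/2"]) (auto simp: subset_eq dist_norm)
qed

lemma star_body_card_ray_frontier:
  "star_body K \<Longrightarrow> v \<noteq> 0 \<Longrightarrow> card ({t *\<^sub>R v | t. True} \<inter> frontier K) = 2"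
  by (simp add: star_body_def)

lemma star_body_continuous_minkowski:
  "star_body K \<Longrightarrow> continuous_on UNIV (minkowski_functional K)"
  by (simp add: star_body_def)

lemma closed_segment_0_iff:
  fixes z :: "'a::real_vector"
  shows "p \<in> closed_segment 0 z \<longleftrightarrow> (\<exists>u. 0 \<le> u \<and> u \<le> 1 \<and> p = u *\<^sub>R z)"
  by (auto simp: closed_segment_def)

lemma star_body_frontier_negative_ray:
  fixes K :: "(real^'n) set"
  assumes sb: "star_body K" and y0: "y \<noteq> 0"
  shows "\<exists>t<0. t *\<^sub>R y \<in> frontier K"
proof -
  obtain R where R: "\<forall>x\<in>K. norm x \<le> R" "R \<ge> 0"
    using star_body_bounded[OF sb] star_body_0_mem[OF sb] by (force simp: bounded_iff)
  define T where "T = (R + 1) / norm y"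
  have T: "T > 0" using y0 R(2) by (simp add: T_def)
  have "norm ((- T) *\<^sub>R y) = R + 1" using y0 T R(2) by (simp add: T_def)
  then have "(- T) *\<^sub>R y \<notin> K" using R(1) by fastforce
  then obtain p where p: "p \<in> closed_segment 0 ((- T) *\<^sub>R y)" "p \<in> frontier K"
    using connected_Int_frontier[of "closed_segment 0 ((- T) *\<^sub>R y)" K] star_body_0_mem[OF sb] by auto
  then obtain u where u: "0 \<le> u" "p = (- (u * T)) *\<^sub>R y" by (auto simp: closed_segment_0_iff)
  have "u \<noteq> 0" using u p(2) star_body_0_interior[OF sb] by (auto simp: frontier_def)
  then show ?thesis using u p(2) T by (intro exI[of _ "- (u * T)"]) auto
qed

(* Otherwise the line through y would meet the frontier three times: between 0 and a y,
   between a y and y, and on the opposite side of 0. *)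
lemma star_body_scaleR_mem:
  fixes K :: "(real^'n) set"
  assumes sb: "star_body K" and y: "y \<in> K" and a: "0 \<le> a" "a \<le> 1"
  shows "a *\<^sub>R y \<in> K"
proof (rule ccontr)
  assume ay: "a *\<^sub>R y \<notin> K"
  have y0: "y \<noteq> 0" using ay star_body_0_mem[OF sb] by auto
  have fK: "frontier K \<subseteq> K" using star_body_closed[OF sb] by (simp add: frontier_subset_closed)
  have f0: "0 \<notin> frontier K" using star_body_0_interior[OF sb] by (simp add: frontier_def)
  let ?L = "{t *\<^sub>R y | t. True}"
  obtain p1 where p1: "p1 \<in> closed_segment 0 (a *\<^sub>R y)" "p1 \<in> frontier K"
    using connected_Int_frontier[of "closed_segment 0 (a *\<^sub>R y)" K] ay star_body_0_mem[OF sb] by auto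
  obtain p2 where p2: "p2 \<in> closed_segment (a *\<^sub>R y) y" "p2 \<in> frontier K"
    using connected_Int_frontier[of "closed_segment (a *\<^sub>R y) y" K] ay y by auto
  obtain t3 where t3: "t3 < 0" "t3 *\<^sub>R y \<in> frontier K"
    using star_body_frontier_negative_ray[OF sb y0] by blast
  obtain u1 where u1: "0 \<le> u1" "u1 \<le> 1" "p1 = (u1 * a) *\<^sub>R y"
    using p1(1) by (auto simp: closed_segment_0_iff)
  obtain u2 where u2: "0 \<le> u2" "u2 \<le> 1" "p2 = ((1 - u2) * a + u2) *\<^sub>R y"
    using p2(1) by (auto simp: closed_segment_def algebra_simps)
  have "u1 * a \<noteq> a" using u1 p1(2) fK ay by auto
  moreover have "u1 * a \<noteq> 0" using u1 p1(2) f0 by auto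
  moreover have "0 \<le> u1 * a" "u1 * a \<le> a" using u1 a by (auto simp: mult_left_le_one_le)
  ultimately have t1: "0 < u1 * a" "u1 * a < a" by linarith+
  have t2: "(1 - u2) * a + u2 > a"
  proof -
    have "(1 - u2) * a + u2 \<noteq> a" using u2 p2(2) fK ay by auto
    moreover have "(1 - u2) * a + u2 \<ge> a"
    proof -
      have "u2 * (1 - a) \<ge> 0" using u2 a by simp
      moreover have "(1 - u2) * a + u2 - a = u2 * (1 - a)" by (simp add: algebra_simps)
      ultimately show ?thesis by linarith
    qed
    ultimately show ?thesis by simp
  qed
  have inj: "s *\<^sub>R y = t *\<^sub>R y \<longleftrightarrow> s = t" for s t using y0 by (simp add: scaleR_cancel_right)
  have "{p1, p2, t3 *\<^sub>R y} \<subseteq> ?L \<inter> frontier K" using p1 p2 t3 u1 u2 by blast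
  moreover have "card {p1, p2, t3 *\<^sub>R y} = 3"
  proof -
    have "p1 \<noteq> p2" unfolding u1(3) u2(3) inj using t1 t2 by linarith
    moreover have "p1 \<noteq> t3 *\<^sub>R y" unfolding u1(3) inj using t1 t3 by linarith
    moreover have "p2 \<noteq> t3 *\<^sub>R y" unfolding u2(3) inj using t1 t2 t3 by linarith
    ultimately show ?thesis by simp
  qed
  moreover have "finite (?L \<inter> frontier K)" using star_body_card_ray_frontier[OF sb y0] by (metis card.infinite zero_neq_numeral)
  ultimately have "3 \<le> card (?L \<inter> frontier K)" by (metis card_mono)
  then show False using star_body_card_ray_frontier[OF sb y0] by simp
qed

lemma minkowski_set_nonempty:
  fixes K :: "(real^'n) set"
  assumes sb: "star_body K" and x: "x \<noteq> 0"
  shows "{a. a \<ge> 0 \<and> x \<in> (\<lambda>y. a *\<^sub>R y) ` K} \<noteq> {}"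
proof -
  obtain d where d: "d > 0" "cball 0 d \<subseteq> K" using star_body_cball_subset[OF sb] by blast
  have nx: "norm x > 0" using x by simp
  have "(d / norm x) *\<^sub>R x \<in> K" using d nx by (intro subsetD[OF d(2)]) (simp add: dist_norm)
  moreover have "x = (norm x / d) *\<^sub>R ((d / norm x) *\<^sub>R x)" using d nx by simp
  ultimately have "norm x / d \<in> {a. a \<ge> 0 \<and> x \<in> (\<lambda>y. a *\<^sub>R y) ` K}"
    using d nx by (auto intro!: image_eqI)
  then show ?thesis by blast
qed

lemma minkowski_functional_pos:
  fixes K :: "(real^'n) set"
  assumes sb: "star_body K" and x: "x \<noteq> 0"
  shows "minkowski_functional K x > 0"
proof -
  let ?S = "{a. a \<ge> 0 \<and> x \<in> (\<lambda>y. a *\<^sub>R y) ` K}"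
  obtain d where d: "d > 0" "cball 0 d \<subseteq> K" using star_body_cball_subset[OF sb] by blast
  have nx: "norm x > 0" using x by simp
  obtain R where R: "\<forall>y\<in>K. norm y \<le> R" using star_body_bounded[OF sb] by (auto simp: bounded_iff)
  have Rpos: "R > 0"
  proof -
    have "d *\<^sub>R (x /\<^sub>R norm x) \<in> K" using d nx by (intro subsetD[OF d(2)]) (simp add: dist_norm)
    then have "norm (d *\<^sub>R (x /\<^sub>R norm x)) \<le> R" using R by blast
    moreover have "norm (d *\<^sub>R (x /\<^sub>R norm x)) = d" using d nx by simp
    ultimately show ?thesis using d by (metis less_le_trans)
  qed
  have "norm x / R \<le> a" if "a \<in> ?S" for a
  proof -
    from that obtain y where y: "y \<in> K" "x = a *\<^sub>R y" "a \<ge> 0" by auto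
    have "norm x = a * norm y" using y by simp
    also have "\<dots> \<le> a * R" using y R by (simp add: mult_left_mono)
    finally show ?thesis using Rpos by (simp add: divide_le_eq mult.commute)
  qed
  then have "norm x / R \<le> Inf ?S" using minkowski_set_nonempty[OF sb x] by (intro cInf_greatest) auto
  then show ?thesis unfolding minkowski_functional_def
    using nx Rpos by (smt (verit) divide_pos_pos)
qed

lemma star_body_scaleR_mem_of_less:
  fixes K :: "(real^'n) set"
  assumes sb: "star_body K" and x: "x \<noteq> 0" and t: "t \<ge> 0" "t * minkowski_functional K x < 1"
  shows "t *\<^sub>R x \<in> K"
proof (cases "t = 0")
  case True then show ?thesis using star_body_0_mem[OF sb] by simp
next
  case False
  let ?S = "{a. a \<ge> 0 \<and> x \<in> (\<lambda>y. a *\<^sub>R y) ` K}"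
  have tp: "t > 0" using t False by simp
  then have "Inf ?S < 1 / t" using t by (simp add: minkowski_functional_def field_simps)
  then obtain a where a: "a \<in> ?S" "a < 1 / t" using cInf_lessD[OF minkowski_set_nonempty[OF sb x]] by blast
  then obtain y where y: "y \<in> K" "x = a *\<^sub>R y" "a \<ge> 0" by auto
  have "t * a < 1" using a tp by (simp add: field_simps)
  then have "(t * a) *\<^sub>R y \<in> K" using y tp by (intro star_body_scaleR_mem[OF sb]) auto
  then show ?thesis using y by simp
qed

lemma star_body_scaleR_mem_iff:
  fixes K :: "(real^'n) set"
  assumes sb: "star_body K" and x: "x \<noteq> 0" and s: "s \<ge> 0"
  shows "s *\<^sub>R x \<in> K \<longleftrightarrow> s * minkowski_functional K x \<le> 1"
proof
  assume sx: "s *\<^sub>R x \<in> K"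
  show "s * minkowski_functional K x \<le> 1"
  proof (cases "s = 0")
    case False
    then have sp: "s > 0" using s by simp
    have "x = (1 / s) *\<^sub>R (s *\<^sub>R x)" using sp by simp
    then have "1 / s \<in> {a. a \<ge> 0 \<and> x \<in> (\<lambda>y. a *\<^sub>R y) ` K}" using sx sp by (auto intro!: image_eqI)
    then have "minkowski_functional K x \<le> 1 / s"
      unfolding minkowski_functional_def by (rule cInf_lower) (auto intro!: bdd_belowI[of _ 0])
    then show ?thesis using sp by (simp add: field_simps)
  qed simp
next
  assume le: "s * minkowski_functional K x \<le> 1"
  have closed: "closed {t. t *\<^sub>R x \<in> K}"
    using continuous_closed_vimage[OF star_body_closed[OF sb], of "\<lambda>t. t *\<^sub>R x"]
    by (simp add: vimage_def continuous_intros)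
  \<comment> \<open>the boundary case s * minkowski_functional K x = 1 follows by closedness of K along the ray\<close>
  have "{0..<s} \<subseteq> {t. t *\<^sub>R x \<in> K}"
  proof
    fix t assume t: "t \<in> {0..<s}"
    have "t * minkowski_functional K x < s * minkowski_functional K x"
      using t minkowski_functional_pos[OF sb x] by (intro mult_strict_right_mono) auto
    then have "t * minkowski_functional K x < 1" using le by linarith
    then show "t \<in> {t. t *\<^sub>R x \<in> K}" using t star_body_scaleR_mem_of_less[OF sb x] by auto
  qed
  then have "closure {0..<s} \<subseteq> {t. t *\<^sub>R x \<in> K}" using closed by (intro closure_minimal)
  moreover have "s \<in> closure {0..<s} \<or> s = 0" using s by (cases "s = 0") auto
  ultimately show "s *\<^sub>R x \<in> K" using star_body_0_mem[OF sb] by auto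
qed

(* radial_integral K f m \<theta> = \<integral>\<^sub>0^\<rho> r^(m-1) f(r\<theta>) dr with \<rho> = 1 / \<parallel>\<theta>\<parallel>\<^sub>K, written after the
   substitution r = \<rho> t so that it is a parameter integral over the fixed interval [0,1]. *)
definition radial_integral :: "(real^'n) set \<Rightarrow> (real^'n \<Rightarrow> real) \<Rightarrow> nat \<Rightarrow> real^'n \<Rightarrow> real" where
  "radial_integral K f m \<theta> = (1 / minkowski_functional K \<theta>)^m *
     integral {0..1} (\<lambda>t. t^(m-1) * f ((t / minkowski_functional K \<theta>) *\<^sub>R \<theta>))"

lemma borel_measurable_indicator_mult[measurable]:
  fixes K :: "(real^'n) set" and f :: "real^'n \<Rightarrow> real"
  assumes "closed K" "continuous_on K f"
  shows "(\<lambda>x. indicator K x * f x) \<in> borel_measurable borel"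
  using borel_measurable_continuous_on_indicator[of K f] assms by (simp add: borel_closed)

lemma continuous_on_radial_integrand:
  fixes K :: "(real^'n) set" and f :: "real^'n \<Rightarrow> real"
  assumes sb: "star_body K" and fc: "continuous_on K f"
  shows "continuous_on (sphere 0 1 \<times> {0..1}) (\<lambda>(\<theta>, t). t^(m-1) * f ((t / minkowski_functional K \<theta>) *\<^sub>R \<theta>))"
proof -
  have mkc: "continuous_on (sphere 0 1 \<times> {0..1}) (\<lambda>(\<theta>::real^'n, t::real). minkowski_functional K \<theta>)"
    using continuous_on_subset[OF star_body_continuous_minkowski[OF sb]] by (auto intro!: continuous_on_compose2[OF star_body_continuous_minkowski[OF sb]] continuous_intros simp: case_prod_unfold)
  have mkne: "minkowski_functional K \<theta> \<noteq> 0" if "\<theta> \<in> sphere 0 1" for \<theta> :: "real^'n"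
  proof -
    have "\<theta> \<noteq> 0" using that by auto
    then show ?thesis using minkowski_functional_pos[OF sb] by fastforce
  qed
  have inK: "(\<lambda>(\<theta>, t). (t / minkowski_functional K \<theta>) *\<^sub>R \<theta>) ` (sphere 0 1 \<times> {0..1}) \<subseteq> K"
  proof clarify
    fix \<theta> :: "real^'n" and t :: real
    assume th: "\<theta> \<in> sphere 0 1" and t: "t \<in> {0..1}"
    then have th0: "\<theta> \<noteq> 0" by auto
    have p: "minkowski_functional K \<theta> > 0" using minkowski_functional_pos[OF sb th0] .
    show "(t / minkowski_functional K \<theta>) *\<^sub>R \<theta> \<in> K"
      using star_body_scaleR_mem_iff[OF sb th0, of "t / minkowski_functional K \<theta>"] p t by auto
  qed
  have c1: "continuous_on (sphere 0 1 \<times> {0..1}) (\<lambda>(\<theta>::real^'n, t::real). (t / minkowski_functional K \<theta>) *\<^sub>R \<theta>)"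
    using mkc mkne unfolding case_prod_unfold
    by (intro continuous_intros) (auto simp: case_prod_unfold)
  have c2: "continuous_on (sphere 0 1 \<times> {0..1}) (\<lambda>x. f ((\<lambda>(\<theta>::real^'n, t::real). (t / minkowski_functional K \<theta>) *\<^sub>R \<theta>) x))"
    by (rule continuous_on_compose2[OF fc c1 inK])
  show ?thesis unfolding case_prod_unfold
    using c2 unfolding case_prod_unfold by (intro continuous_intros) auto
qed

lemma continuous_on_radial_integrand_ray:
  fixes K :: "(real^'n) set" and f :: "real^'n \<Rightarrow> real"
  assumes sb: "star_body K" and fc: "continuous_on K f" and \<theta>: "\<theta> \<in> sphere 0 1"
  shows "continuous_on {0..1} (\<lambda>t. t^(m-1) * f ((t / minkowski_functional K \<theta>) *\<^sub>R \<theta>))"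
proof -
  have "continuous_on {0..1} (\<lambda>t. (\<lambda>(\<theta>, t). t^(m-1) * f ((t / minkowski_functional K \<theta>) *\<^sub>R \<theta>)) (\<theta>, t))"
    by (rule continuous_on_compose2[OF continuous_on_radial_integrand[OF sb fc, of m]])
      (use \<theta> in \<open>auto intro!: continuous_intros\<close>)
  then show ?thesis by simp
qed

lemma radial_integrand_nonneg:
  fixes K :: "(real^'n) set" and f :: "real^'n \<Rightarrow> real"
  assumes sb: "star_body K" and f0: "\<And>x. x \<in> K \<Longrightarrow> f x \<ge> 0"
    and \<theta>: "\<theta> \<in> sphere 0 1" and t: "t \<in> {0..1}"
  shows "0 \<le> t^(m-1) * f ((t / minkowski_functional K \<theta>) *\<^sub>R \<theta>)"
proof -
  have \<theta>0: "\<theta> \<noteq> 0" using \<theta> by auto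
  have "(t / minkowski_functional K \<theta>) *\<^sub>R \<theta> \<in> K"
    using star_body_scaleR_mem_iff[OF sb \<theta>0, of "t / minkowski_functional K \<theta>"] t
      minkowski_functional_pos[OF sb \<theta>0] by auto
  then show ?thesis using t f0 by simp
qed

lemma radial_integral_nonneg:
  fixes K :: "(real^'n) set" and f :: "real^'n \<Rightarrow> real"
  assumes sb: "star_body K" and fc: "continuous_on K f" and f0: "\<And>x. x \<in> K \<Longrightarrow> f x \<ge> 0"
    and \<theta>: "\<theta> \<in> sphere 0 1"
  shows "radial_integral K f m \<theta> \<ge> 0"
proof -
  have "integral {0..1} (\<lambda>t. t^(m-1) * f ((t / minkowski_functional K \<theta>) *\<^sub>R \<theta>)) \<ge> 0"
    using continuous_on_radial_integrand_ray[where m=m, OF sb fc \<theta>]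
      radial_integrand_nonneg[where K=K and f=f and m=m, OF sb f0 \<theta>]
    by (intro integral_nonneg integrable_continuous_interval) auto
  moreover have "minkowski_functional K \<theta> > 0" using \<theta> by (intro minkowski_functional_pos[OF sb]) auto
  ultimately show ?thesis unfolding radial_integral_def by simp
qed

lemma continuous_on_radial_integral:
  fixes K :: "(real^'n) set" and f :: "real^'n \<Rightarrow> real"
  assumes sb: "star_body K" and fc: "continuous_on K f"
  shows "continuous_on (sphere 0 1) (radial_integral K f m)"
proof -
  have mkne: "minkowski_functional K \<theta> \<noteq> 0" if "\<theta> \<in> sphere 0 1" for \<theta> :: "real^'n"
  proof -
    have "\<theta> \<noteq> 0" using that by auto
    then show ?thesis using minkowski_functional_pos[OF sb] by fastforce
  qed
  have "continuous_on (sphere 0 1) (\<lambda>\<theta>::real^'n. integral (cbox 0 1) (\<lambda>t::real. t^(m-1) * f ((t / minkowski_functional K \<theta>) *\<^sub>R \<theta>)))"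
    using continuous_on_radial_integrand[OF sb fc, of m] by (intro integral_continuous_on_param) (simp add: cbox_interval)
  then have i: "continuous_on (sphere 0 1) (\<lambda>\<theta>::real^'n. integral {0..1} (\<lambda>t::real. t^(m-1) * f ((t / minkowski_functional K \<theta>) *\<^sub>R \<theta>)))"
    by (simp add: cbox_interval)
  have "continuous_on (sphere 0 1) (minkowski_functional K)" using continuous_on_subset[OF star_body_continuous_minkowski[OF sb]] by auto
  then show ?thesis unfolding radial_integral_def using i mkne by (intro continuous_intros) auto
qed

lemma nn_integral_ray_eq_radial_integral:
  fixes K :: "(real^'n) set" and f :: "real^'n \<Rightarrow> real"
  assumes sb: "star_body K" and fc: "continuous_on K f" and f0: "\<And>x. x \<in> K \<Longrightarrow> f x \<ge> 0"
    and m: "m \<ge> 1" and ths: "\<theta> \<in> sphere 0 1"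
  shows "(\<integral>\<^sup>+r. ennreal (r^(m-1)) * indicator {0<..} r * ennreal (indicator K (r *\<^sub>R \<theta>) * f (r *\<^sub>R \<theta>)) \<partial>lborel)
     = ennreal (radial_integral K f m \<theta>)"
proof -
  have th: "\<theta> \<noteq> 0" using ths by auto
  define \<mu> where "\<mu> = minkowski_functional K \<theta>"
  have mup: "\<mu> > 0" unfolding \<mu>_def by (rule minkowski_functional_pos[OF sb th])
  define \<rho> where "\<rho> = 1 / \<mu>"
  have rp: "\<rho> > 0" using mup by (simp add: \<rho>_def)
  define \<phi> where "\<phi> t = t^(m-1) * f ((t / \<mu>) *\<^sub>R \<theta>)" for t
  have fKm[measurable]: "(\<lambda>x. indicator K x * f x) \<in> borel_measurable borel"
    by (rule borel_measurable_indicator_mult[OF star_body_closed[OF sb] fc])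
  have phic: "continuous_on {0..1} \<phi>"
    using continuous_on_radial_integrand_ray[where m=m, OF sb fc ths] by (simp add: \<phi>_def \<mu>_def)
  have phi0: "0 \<le> \<phi> t" if "t \<in> {0..1}" for t
    using radial_integrand_nonneg[where K=K and f=f and m=m, OF sb f0 ths that] by (simp add: \<phi>_def \<mu>_def)
  have phim[measurable]: "(\<lambda>t. indicator {0..1} t * \<phi> t) \<in> borel_measurable borel"
    using borel_measurable_continuous_on_indicator[OF _ phic] by simp
  have "(\<integral>\<^sup>+r. ennreal (r^(m-1)) * indicator {0<..} r * ennreal (indicator K (r *\<^sub>R \<theta>) * f (r *\<^sub>R \<theta>)) \<partial>lborel)
      = ennreal \<rho> * (\<integral>\<^sup>+t. ennreal ((0 + \<rho> * t)^(m-1)) * indicator {0<..} (0 + \<rho> * t) * ennreal (indicator K ((0 + \<rho> * t) *\<^sub>R \<theta>) * f ((0 + \<rho> * t) *\<^sub>R \<theta>)) \<partial>lborel)"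
    using rp by (subst nn_integral_real_affine[of _ \<rho> 0]) auto
  also have "(\<integral>\<^sup>+t. ennreal ((0 + \<rho> * t)^(m-1)) * indicator {0<..} (0 + \<rho> * t) * ennreal (indicator K ((0 + \<rho> * t) *\<^sub>R \<theta>) * f ((0 + \<rho> * t) *\<^sub>R \<theta>)) \<partial>lborel)
      = (\<integral>\<^sup>+t. ennreal (\<rho>^(m-1)) * ennreal (indicator {0..1} t * \<phi> t) \<partial>lborel)"
  proof (rule nn_integral_cong_AE)
    show "AE t in lborel. ennreal ((0 + \<rho> * t)^(m-1)) * indicator {0<..} (0 + \<rho> * t) * ennreal (indicator K ((0 + \<rho> * t) *\<^sub>R \<theta>) * f ((0 + \<rho> * t) *\<^sub>R \<theta>))
        = ennreal (\<rho>^(m-1)) * ennreal (indicator {0..1} t * \<phi> t)"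
      using AE_lborel_singleton[of 0]
    proof eventually_elim
      case (elim t)
      show ?case
      proof (cases "t > 0")
        case False
        then have "\<not> 0 < \<rho> * t" using rp by (simp add: zero_less_mult_iff)
        then show ?thesis using False elim by (simp add: indicator_def)
      next
        case True
        have eqK: "(\<rho> * t) *\<^sub>R \<theta> \<in> K \<longleftrightarrow> t \<le> 1"
          using star_body_scaleR_mem_iff[OF sb th, of "\<rho> * t"] rp True mup unfolding \<mu>_def[symmetric]
          by (simp add: \<rho>_def)
        have rt: "(\<rho> * t) *\<^sub>R \<theta> = (t / \<mu>) *\<^sub>R \<theta>" by (simp add: \<rho>_def)
        show ?thesis
        proof (cases "t \<le> 1")
          case True2: True
          have "f ((t / \<mu>) *\<^sub>R \<theta>) \<ge> 0" using f0 eqK True2 rt by simp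
          then show ?thesis using True True2 eqK rp
            by (simp add: indicator_def \<phi>_def rt ennreal_mult[symmetric] power_mult_distrib mult.assoc)
        next
          case False
          then show ?thesis using True eqK rp by (simp add: indicator_def)
        qed
      qed
    qed
  qed
  also have "\<dots> = ennreal (\<rho>^(m-1)) * (\<integral>\<^sup>+t. ennreal (indicator {0..1} t * \<phi> t) \<partial>lborel)"
    by (rule nn_integral_cmult) measurable
  also have "(\<integral>\<^sup>+t. ennreal (indicator {0..1} t * \<phi> t) \<partial>lborel) = ennreal (integral {0..1} \<phi>)"
    using phic by (intro nn_integral_has_integral_lebesgue phi0 integrable_integral integrable_continuous_interval)
  finally have "(\<integral>\<^sup>+r. ennreal (r^(m-1)) * indicator {0<..} r * ennreal (indicator K (r *\<^sub>R \<theta>) * f (r *\<^sub>R \<theta>)) \<partial>lborel)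
     = ennreal \<rho> * (ennreal (\<rho>^(m-1)) * ennreal (integral {0..1} \<phi>))" .
  also have "\<dots> = ennreal (\<rho>^m * integral {0..1} \<phi>)"
  proof -
    have "integral {0..1} \<phi> \<ge> 0"
      using phic phi0 by (intro integral_nonneg integrable_continuous_interval)
    then show ?thesis using rp m
      by (cases m) (auto simp: ennreal_mult[symmetric] mult.assoc)
  qed
  also have "\<rho>^m * integral {0..1} \<phi> = radial_integral K f m \<theta>"
  proof -
    have phid: "\<phi> = (\<lambda>t. t^(m-1) * f ((t / \<mu>) *\<^sub>R \<theta>))" by (rule ext) (simp add: \<phi>_def)
    show ?thesis by (simp add: radial_integral_def \<rho>_def \<mu>_def phid)
  qed
  finally show ?thesis .
qed

definition radial_function :: "(real^'n) set \<Rightarrow> real^'n \<Rightarrow> real" where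
  "radial_function K \<theta> = 1 / minkowski_functional K \<theta>"

lemma radial_function_bounds:
  fixes K :: "(real^'n) set"
  assumes sb: "star_body K"
  shows "\<exists>d R. 0 < d \<and> (\<forall>\<theta>\<in>sphere 0 1. d \<le> radial_function K \<theta> \<and> radial_function K \<theta> \<le> R)"
proof -
  obtain d where d: "d > 0" "cball 0 d \<subseteq> K" using star_body_cball_subset[OF sb] by blast
  obtain R where R: "\<forall>y\<in>K. norm y \<le> R" using star_body_bounded[OF sb] by (auto simp: bounded_iff)
  have b: "d \<le> 1 / minkowski_functional K \<theta> \<and> 1 / minkowski_functional K \<theta> \<le> R" if th: "\<theta> \<in> sphere 0 1" for \<theta> :: "real^'n"
  proof -
    have t0: "\<theta> \<noteq> 0" using th by auto
    have p: "minkowski_functional K \<theta> > 0" by (rule minkowski_functional_pos[OF sb t0])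
    have "d *\<^sub>R \<theta> \<in> K" using d th by (intro subsetD[OF d(2)]) (simp add: dist_norm)
    then have "d * minkowski_functional K \<theta> \<le> 1" using star_body_scaleR_mem_iff[OF sb t0, of d] d by simp
    then have 1: "d \<le> 1 / minkowski_functional K \<theta>" using p by (simp add: field_simps)
    have "(1 / minkowski_functional K \<theta>) *\<^sub>R \<theta> \<in> K" using star_body_scaleR_mem_iff[OF sb t0, of "1 / minkowski_functional K \<theta>"] p by simp
    then have "norm ((1 / minkowski_functional K \<theta>) *\<^sub>R \<theta>) \<le> R" using R by blast
    then have 2: "1 / minkowski_functional K \<theta> \<le> R" using th p by simp
    show ?thesis using 1 2 by simp
  qed
  then show ?thesis using d unfolding radial_function_def by blast
qed

lemma rank_eq_trace_orthogonal_projection: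
  fixes P :: "real^'n^'n"
  assumes sym: "transpose P = P" and idem: "P ** P = P"
  shows "real (rank P) = trace P"
proof -
  let ?R = "range (\<lambda>x. P *v x)"
  have sR: "subspace ?R" by (intro linear_subspace_image subspace_UNIV) (simp add: matrix_vector_mul_linear)
  obtain B where B: "B \<subseteq> ?R" "pairwise orthogonal B" "\<And>x. x \<in> B \<Longrightarrow> norm x = 1"
    "independent B" "card B = dim ?R" "span B = ?R"
    using orthonormal_basis_subspace[OF sR] by metis
  have fin: "finite B" using B(4) by (rule independent_imp_finite)
  have Pb: "P *v b = b" if bB: "b \<in> B" for b
  proof -
    obtain y where "b = P *v y" using B(1) bB by auto
    then show ?thesis using idem by (simp add: matrix_vector_mul_assoc)
  qed
  have adj: "(P *v x) \<bullet> y = x \<bullet> (P *v y)" for x y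
  proof -
    have "(P *v x) \<bullet> y = x \<bullet> adjoint (\<lambda>x. P *v x) y"
      by (simp add: adjoint_works matrix_vector_mul_linear)
    then show ?thesis by (simp add: adjoint_matrix sym)
  qed
  have exp: "P *v x = (\<Sum>b\<in>B. (x \<bullet> b) *\<^sub>R b)" for x
  proof -
    have "P *v x \<in> span B" using B(6) by auto
    then have "(\<Sum>b\<in>B. ((P *v x) \<bullet> b) *\<^sub>R b) = P *v x"
      using orthonormal_basis_expand[OF B(2) B(3) _ fin] by blast
    moreover have "(P *v x) \<bullet> b = x \<bullet> b" if "b \<in> B" for b using adj Pb[OF that] by simp
    ultimately show ?thesis by (metis (no_types, lifting) sum.cong)
  qed
  have "trace P = (\<Sum>i\<in>UNIV. (P *v axis i 1) $ i)"
    unfolding trace_def by (intro sum.cong refl) (simp add: matrix_vector_mult_def axis_def mult.commute[of "P $ _ $ _"] if_distrib cong: if_cong)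
  also have "\<dots> = (\<Sum>i\<in>UNIV. \<Sum>b\<in>B. (b $ i) * (b $ i))"
    unfolding exp by (intro sum.cong refl) (simp add: sum_component inner_axis' )
  also have "\<dots> = (\<Sum>b\<in>B. \<Sum>i\<in>UNIV. (b $ i) * (b $ i))" by (rule sum.swap)
  also have "\<dots> = (\<Sum>b\<in>B. 1)"
  proof (intro sum.cong refl)
    fix b assume "b \<in> B"
    then have "b \<bullet> b = 1" using B(3) by (simp add: norm_eq_1)
    then show "(\<Sum>i\<in>UNIV. b $ i * b $ i) = 1" by (simp add: inner_vec_def)
  qed
  also have "\<dots> = real (rank P)" using B(5) by (simp add: rank_dim_range)
  finally show ?thesis by simp
qed

lemma grassmannian_proj_borel:
  "grassmannian_proj m \<in> sets (borel :: (real^'n^'n) measure)"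
proof -
  have eq: "grassmannian_proj m = {P::real^'n^'n. transpose P = P} \<inter> {P. P ** P = P} \<inter> {P. trace P = real m}"
    unfolding grassmannian_proj_def using rank_eq_trace_orthogonal_projection by fastforce
  have c1: "closed {P::real^'n^'n. transpose P = P}"
    unfolding transpose_def by (intro closed_Collect_eq continuous_intros)
  have c2: "closed {P::real^'n^'n. P ** P = P}"
    unfolding matrix_matrix_mult_def by (intro closed_Collect_eq continuous_intros)
  have c3: "closed {P::real^'n^'n. trace P = real m}"
    unfolding trace_def by (intro closed_Collect_eq continuous_intros)
  show ?thesis unfolding eq using c1 c2 c3 by (intro sets.Int borel_closed)
qed

lemma integral_power_Holder:
  fixes N :: "'a measure" and \<rho> :: "'a \<Rightarrow> real" and k n :: nat
  assumes fm: "finite_measure N" and rm[measurable]: "\<rho> \<in> borel_measurable N"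
    and bnd: "AE x in N. d \<le> \<rho> x \<and> \<rho> x \<le> R" and d: "d > 0"
    and kn: "0 < k" "k < n" and S: "measure N (space N) > 0"
  shows "(\<integral>x. \<rho> x ^ k \<partial>N) \<le> (\<integral>x. \<rho> x ^ n \<partial>N) powr (real k / real n) * measure N (space N) powr (real (n - k) / real n)"
proof -
  interpret finite_measure N by (rule fm)
  define S where "S = measure N (space N)"
  define b where "b = (\<integral>x. \<rho> x ^ n \<partial>N)"
  define \<alpha> where "\<alpha> = real k / real n"
  define \<beta> where "\<beta> = real (n - k) / real n"
  have ab: "\<alpha> + \<beta> = 1" "\<alpha> \<ge> 0" "\<beta> \<ge> 0" using kn by (auto simp: \<alpha>_def \<beta>_def field_simps of_nat_diff)
  have Sp: "S > 0" using S by (simp add: S_def)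
  have int: "integrable N (\<lambda>x. \<rho> x ^ j)" for j
  proof (rule integrable_const_bound[where B="R ^ j"])
    show "AE x in N. norm (\<rho> x ^ j) \<le> R ^ j" using bnd
      by eventually_elim (use d in \<open>auto simp: norm_power intro!: power_mono\<close>)
  qed measurable
  have "b \<ge> (\<integral>x. d ^ n \<partial>N)"
    unfolding b_def using int bnd d by (intro integral_mono_AE) (auto elim!: eventually_mono intro!: power_mono)
  then have bp: "b > 0" using d Sp by (simp add: S_def) (smt (verit) mult_pos_pos zero_less_power)
  define C where "C = b powr \<alpha> * S powr \<beta>"
  have Cp: "C > 0" using bp Sp by (simp add: C_def)
  have pw: "\<rho> x ^ k \<le> C * (\<alpha> * (\<rho> x ^ n / b) + \<beta> * (1 / S))" if r: "\<rho> x > 0" for x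
  proof -
    have y: "(\<rho> x ^ n / b) powr \<alpha> * (1 / S) powr \<beta> \<le> \<alpha> * (\<rho> x ^ n / b) + \<beta> * (1 / S)"
      using ab bp Sp r by (intro Youngs_inequality_0) auto
    have "(\<rho> x ^ n / b) powr \<alpha> = \<rho> x ^ k / b powr \<alpha>"
    proof -
      have "(\<rho> x ^ n) powr \<alpha> = \<rho> x powr (real n * \<alpha>)"
        using r by (simp add: powr_realpow[symmetric] powr_powr)
      also have "real n * \<alpha> = real k" using kn by (simp add: \<alpha>_def)
      finally show ?thesis using r bp by (simp add: powr_divide powr_realpow)
    qed
    moreover have "(1 / S) powr \<beta> = 1 / S powr \<beta>" using Sp by (simp add: powr_divide)
    ultimately have "\<rho> x ^ k / C \<le> \<alpha> * (\<rho> x ^ n / b) + \<beta> * (1 / S)"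
      using y by (simp add: C_def)
    then show ?thesis using Cp by (simp add: divide_le_eq mult.commute)
  qed
  have "(\<integral>x. \<rho> x ^ k \<partial>N) \<le> (\<integral>x. C * (\<alpha> * (\<rho> x ^ n / b) + \<beta> * (1 / S)) \<partial>N)"
  proof (rule integral_mono_AE)
    show "integrable N (\<lambda>x. \<rho> x ^ k)" by (rule int)
    show "integrable N (\<lambda>x. C * (\<alpha> * (\<rho> x ^ n / b) + \<beta> * (1 / S)))"
      using int[of n] by simp
    show "AE x in N. \<rho> x ^ k \<le> C * (\<alpha> * (\<rho> x ^ n / b) + \<beta> * (1 / S))"
      using bnd by eventually_elim (use d pw in auto)
  qed
  also have "\<dots> = C * (\<alpha> * (b / b) + \<beta> * (S / S))"
    using int[of n] by (simp add: b_def S_def)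
  also have "\<dots> = C" using bp Sp ab by simp
  finally show ?thesis by (simp add: C_def b_def S_def \<alpha>_def \<beta>_def)
qed

lemma integral_le_const_mult_measure:
  fixes N :: "'a measure" and \<phi> :: "'a \<Rightarrow> real"
  assumes "finite_measure N" "AE x in N. \<phi> x \<le> c" "c \<ge> 0"
  shows "(\<integral>x. \<phi> x \<partial>N) \<le> c * measure N (space N)"
proof (cases "integrable N \<phi>")
  case True
  interpret finite_measure N by (rule assms(1))
  have "(\<integral>x. \<phi> x \<partial>N) \<le> (\<integral>x. c \<partial>N)"
    using True assms by (intro integral_mono_AE) auto
  then show ?thesis by (simp add: mult.commute)
next
  case False
  then show ?thesis using assms by (simp add: not_integrable_integral_eq)
qed

lemma integral_power_unit_interval:
  assumes "n \<ge> 1"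
  shows "integral {0..1::real} (\<lambda>t. t^(n-1) * 1) = 1 / real n"
proof -
  have "((\<lambda>t. t^(n-1)) has_integral ((\<lambda>t. t^n / real n) 1 - (\<lambda>t. t^n / real n) 0)) {0..1::real}"
  proof (rule fundamental_theorem_of_calculus)
    fix x :: real assume "x \<in> {0..1}"
    show "((\<lambda>t. t^n / real n) has_vector_derivative x^(n-1)) (at x within {0..1})"
      using assms unfolding has_real_derivative_iff_has_vector_derivative[symmetric]
      by (auto intro!: derivative_eq_intros)
  qed simp
  then show ?thesis using assms by (simp add: integral_unique)
qed

lemma proj_subspace_grassmannian_proj:
  assumes "P \<in> grassmannian_proj m"
  shows "subspace (proj_subspace P)" "dim (proj_subspace P) = m"
proof -
  show "subspace (proj_subspace P)" unfolding proj_subspace_def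
    by (intro linear_subspace_image subspace_UNIV) (simp add: matrix_vector_mul_linear)
  show "dim (proj_subspace P) = m"
    using assms unfolding grassmannian_proj_def proj_subspace_def by (simp add: rank_dim_range)
qed

lemma AE_grassmannian_proj:
  fixes \<nu> :: "(real^'n^'n) measure"
  assumes "sets \<nu> = sets borel" and "emeasure \<nu> (UNIV - grassmannian_proj m) = 0"
  shows "AE P in \<nu>. P \<in> grassmannian_proj m"
proof (rule AE_I'[of "UNIV - grassmannian_proj m"])
  have "UNIV - grassmannian_proj m \<in> sets \<nu>"
    using grassmannian_proj_borel[of m] unfolding assms(1) by (metis sets.compl_sets space_borel)
  then show "UNIV - grassmannian_proj m \<in> null_sets \<nu>" using assms(2) by (rule null_setsI[rotated])
qed blast

lemma spherical_radon_radial_integral: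
  fixes K :: "(real^'n) set" and f :: "real^'n \<Rightarrow> real" and H :: "(real^'n) set"
  assumes sb: "star_body K" and fc: "continuous_on K f" and f0: "\<And>x. x \<in> K \<Longrightarrow> f x \<ge> 0"
    and H: "subspace H" and m: "dim H \<ge> 1"
  shows "spherical_radon (\<lambda>\<theta>. indicator (sphere 0 1) \<theta> * radial_integral K f (dim H) \<theta>) H
       = (\<integral>x\<in>K \<inter> H. f x \<partial>subspace_lebesgue H)"
proof -
  let ?\<mu> = "subspace_lebesgue H"
  let ?\<sigma> = "sphere_measure (dim H) ?\<mu>"
  let ?g = "\<lambda>\<theta>::real^'n. indicator (sphere 0 1) \<theta> * radial_integral K f (dim H) \<theta>"
  have zero: "emeasure ?\<mu> {0} = 0" by (rule emeasure_subspace_lebesgue_singleton_0[OF H m])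
  have AE_sphere: "AE \<theta> in ?\<sigma>. \<theta> \<in> sphere 0 1"
    by (rule AE_sphere_measure_sphere[OF sets_subspace_lebesgue zero])
  have [measurable]: "?g \<in> borel_measurable borel"
    using borel_measurable_continuous_on_indicator[OF _ continuous_on_radial_integral[OF sb fc]] by simp
  have g0: "?g \<theta> \<ge> 0" for \<theta>
    using radial_integral_nonneg[OF sb fc f0, of \<theta> "dim H"] by (simp add: indicator_def)
  have fKm[measurable]: "(\<lambda>x. indicator K x * f x) \<in> borel_measurable borel"
    by (rule borel_measurable_indicator_mult[OF star_body_closed[OF sb] fc])
  have fKHm: "(\<lambda>x. indicator (K \<inter> H) x * f x) \<in> borel_measurable borel"
    using star_body_closed[OF sb] closed_subspace[OF H]
    by (intro borel_measurable_indicator_mult continuous_on_subset[OF fc]) auto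
  have "spherical_radon ?g H = (\<integral>\<theta>. ?g \<theta> \<partial>?\<sigma>)" by (simp add: spherical_radon_def)
  also have "\<dots> = enn2real (\<integral>\<^sup>+\<theta>. ennreal (?g \<theta>) \<partial>?\<sigma>)"
    by (rule integral_eq_nn_integral) (auto simp: measurable_cong_sets[OF sets_sphere_measure refl] g0)
  also have "(\<integral>\<^sup>+\<theta>. ennreal (?g \<theta>) \<partial>?\<sigma>) = (\<integral>\<^sup>+\<theta>. (\<integral>\<^sup>+r. ennreal (r^(dim H - 1)) * indicator {0<..} r *
      ennreal (indicator K (r *\<^sub>R \<theta>) * f (r *\<^sub>R \<theta>)) \<partial>lborel) \<partial>?\<sigma>)"
  proof (rule nn_integral_cong_AE)
    show "AE \<theta> in ?\<sigma>. ennreal (?g \<theta>) = (\<integral>\<^sup>+r. ennreal (r^(dim H - 1)) * indicator {0<..} r *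
        ennreal (indicator K (r *\<^sub>R \<theta>) * f (r *\<^sub>R \<theta>)) \<partial>lborel)"
      using AE_sphere
    proof eventually_elim
      case (elim \<theta>)
      show ?case using nn_integral_ray_eq_radial_integral[OF sb fc f0 m elim] elim by simp
    qed
  qed
  also have "\<dots> = (\<integral>\<^sup>+x. ennreal (indicator K x * f x) \<partial>?\<mu>)"
    by (rule nn_integral_polar[OF sets_subspace_lebesgue sigma_finite_subspace_lebesgue[OF H] m
          nn_integral_subspace_lebesgue_scaleR zero, symmetric])
      (auto intro!: measurable_compose[OF fKm])
  also have "\<dots> = (\<integral>\<^sup>+x. ennreal (indicator (K \<inter> H) x * f x) \<partial>?\<mu>)"
    by (rule nn_integral_cong_AE) (use AE_subspace_lebesgue_mem[OF H] in \<open>auto simp: indicator_def\<close>)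
  also have "enn2real \<dots> = (\<integral>x. indicator (K \<inter> H) x * f x \<partial>?\<mu>)"
  proof (rule integral_eq_nn_integral[symmetric])
    show "(\<lambda>x. indicator (K \<inter> H) x * f x) \<in> borel_measurable ?\<mu>" using fKHm by (simp add: measurable_cong_sets[OF sets_subspace_lebesgue refl])
    show "AE x in ?\<mu>. 0 \<le> indicator (K \<inter> H) x * f x" by (auto simp: indicator_def f0)
  qed
  also have "\<dots> = (\<integral>x\<in>K \<inter> H. f x \<partial>?\<mu>)" by (simp add: set_lebesgue_integral_def)
  finally show ?thesis .
qed

lemma spherical_radon_indicator_sphere:
  fixes H :: "(real^'n) set"
  assumes H: "subspace H" and m: "dim H \<ge> 1"
  shows "spherical_radon (indicator (sphere 0 1)) H = real (dim H) * unit_ball_vol (dim H)"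
proof -
  let ?\<sigma> = "sphere_measure (dim H) (subspace_lebesgue H)"
  have [measurable]: "sphere (0::real^'n) 1 \<in> sets borel" by (simp add: borel_closed)
  have AE_sphere: "AE \<theta> in ?\<sigma>. \<theta> \<in> sphere 0 1"
    by (rule AE_sphere_measure_sphere[OF sets_subspace_lebesgue emeasure_subspace_lebesgue_singleton_0[OF H m]])
  have "spherical_radon (indicator (sphere 0 1)) H = (\<integral>\<theta>. indicator (sphere 0 1) \<theta> \<partial>?\<sigma>)"
    by (simp add: spherical_radon_def)
  also have "\<dots> = (\<integral>\<theta>. 1 \<partial>?\<sigma>)"
    using AE_sphere by (intro integral_cong_AE) (auto elim!: eventually_mono)
  also have "\<dots> = real (dim H) * unit_ball_vol (dim H)"
    using emeasure_sphere_measure_UNIV[OF sets_subspace_lebesgue, of "dim H" H]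
    by (simp add: measure_def emeasure_subspace_lebesgue_cball[OF H] ennreal_of_nat_eq_real_of_nat
        ennreal_mult[symmetric])
  finally show ?thesis .
qed

lemma nn_integral_lborel_polar:
  fixes F :: "real^'n \<Rightarrow> ennreal"
  assumes "F \<in> borel_measurable borel"
  shows "(\<integral>\<^sup>+x. F x \<partial>lborel) = (\<integral>\<^sup>+\<theta>. (\<integral>\<^sup>+r. ennreal (r^(CARD('n)-1)) * indicator {0<..} r * F (r *\<^sub>R \<theta>)
      \<partial>lborel) \<partial>sphere_measure CARD('n) lborel)"
  by (rule nn_integral_polar[OF _ lborel.sigma_finite_measure_axioms _ nn_integral_lborel_scaleR _ assms])
    (auto simp: emeasure_lborel_countable Suc_le_eq)

lemma AE_sphere_measure_lborel: "AE \<theta> in sphere_measure m (lborel :: (real^'n) measure). \<theta> \<in> sphere 0 1"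
  by (rule AE_sphere_measure_sphere) (simp_all add: emeasure_lborel_countable)

lemma finite_measure_sphere_measure_lborel: "finite_measure (sphere_measure m (lborel :: (real^'n) measure))"
  by (rule finite_measure_sphere_measure) (simp_all add: emeasure_cball)

lemma measure_sphere_measure_lborel:
  "measure (sphere_measure CARD('n) (lborel :: (real^'n) measure)) UNIV = CARD('n) * unit_ball_vol CARD('n)"
  using emeasure_sphere_measure_UNIV[of "lborel :: (real^'n) measure" "CARD('n)"] emeasure_cball[of 1 "0::real^'n"]
  by (simp add: measure_def ennreal_of_nat_eq_real_of_nat ennreal_mult[symmetric])

lemma minkowski_functional_powr_eq_radial_function:
  assumes "star_body K" and "\<theta> \<noteq> 0"
  shows "minkowski_functional K \<theta> powr (- real j) = radial_function K \<theta> ^ j"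
  using minkowski_functional_pos[OF assms]
  by (simp add: radial_function_def powr_minus_divide powr_realpow divide_inverse power_inverse)

lemma borel_measurable_radial_function:
  "star_body K \<Longrightarrow> radial_function K \<in> borel_measurable borel"
  unfolding radial_function_def
  using borel_measurable_continuous_onI[OF star_body_continuous_minkowski] by measurable

lemma integrable_radial_function_power:
  fixes K :: "(real^'n) set"
  assumes sb: "star_body K"
  shows "integrable (sphere_measure m lborel) (\<lambda>\<theta>. radial_function K \<theta> ^ j)"
proof -
  interpret finite_measure "sphere_measure m (lborel :: (real^'n) measure)"
    by (rule finite_measure_sphere_measure_lborel)
  obtain d R where dR: "0 < d" "\<And>\<theta>. \<theta> \<in> sphere 0 1 \<Longrightarrow> d \<le> radial_function K \<theta> \<and> radial_function K \<theta> \<le> R"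
    using radial_function_bounds[OF sb] by blast
  have [measurable]: "radial_function K \<in> borel_measurable borel"
    by (rule borel_measurable_radial_function[OF sb])
  show ?thesis
  proof (rule integrable_const_bound[where B="R ^ j"])
    show "AE \<theta> in sphere_measure m lborel. norm (radial_function K \<theta> ^ j) \<le> R ^ j"
      using AE_sphere_measure_lborel
    proof eventually_elim
      case (elim \<theta>)
      then have "0 \<le> radial_function K \<theta>" "radial_function K \<theta> \<le> R" using dR by force+
      then show ?case by (simp add: norm_power power_mono)
    qed
  qed measurable
qed

lemma radial_integral_const_one:
  assumes "n \<ge> 1"
  shows "radial_integral K (\<lambda>_. 1) n \<theta> = radial_function K \<theta> ^ n / n"
  using integral_power_unit_interval[OF assms] by (simp add: radial_integral_def radial_function_def)

lemma measure_star_body_polar: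
  fixes K :: "(real^'n) set"
  assumes sb: "star_body K"
  shows "measure lborel K =
    (\<integral>\<theta>. radial_function K \<theta> ^ CARD('n) \<partial>sphere_measure CARD('n) lborel) / CARD('n)"
proof -
  let ?n = "CARD('n)"
  let ?\<sigma> = "sphere_measure ?n (lborel :: (real^'n) measure)"
  have n: "?n \<ge> 1" by (simp add: Suc_le_eq)
  have Km[measurable]: "K \<in> sets borel" using star_body_closed[OF sb] by (simp add: borel_closed)
  have one0: "\<And>x. x \<in> K \<Longrightarrow> (0::real) \<le> 1" by simp
  have nonneg: "AE \<theta> in ?\<sigma>. 0 \<le> radial_function K \<theta> ^ ?n / ?n"
  proof -
    obtain d R where dR: "0 < d" "\<And>\<theta>. \<theta> \<in> sphere 0 1 \<Longrightarrow> d \<le> radial_function K \<theta> \<and> radial_function K \<theta> \<le> R"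
      using radial_function_bounds[OF sb] by blast
    show ?thesis using AE_sphere_measure_lborel[of ?n]
    proof eventually_elim
      case (elim \<theta>)
      have "0 \<le> radial_function K \<theta>" using dR(1) dR(2)[OF elim] by linarith
      then show ?case by simp
    qed
  qed
  have "emeasure lborel K = (\<integral>\<^sup>+x. indicator K x \<partial>lborel)"
    using Km by simp
  also have "\<dots> = (\<integral>\<^sup>+x. ennreal (indicator K x * 1) \<partial>lborel)"
    by (intro nn_integral_cong) (simp add: indicator_def)
  also have "\<dots> = (\<integral>\<^sup>+\<theta>. (\<integral>\<^sup>+r. ennreal (r^(?n-1)) * indicator {0<..} r *
      ennreal (indicator K (r *\<^sub>R \<theta>) * 1) \<partial>lborel) \<partial>?\<sigma>)"
    by (rule nn_integral_lborel_polar) measurable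
  also have "\<dots> = (\<integral>\<^sup>+\<theta>. ennreal (radial_function K \<theta> ^ ?n / ?n) \<partial>?\<sigma>)"
  proof (rule nn_integral_cong_AE)
    show "AE \<theta> in ?\<sigma>. (\<integral>\<^sup>+r. ennreal (r^(?n-1)) * indicator {0<..} r *
        ennreal (indicator K (r *\<^sub>R \<theta>) * 1) \<partial>lborel) = ennreal (radial_function K \<theta> ^ ?n / ?n)"
      using AE_sphere_measure_lborel
    proof eventually_elim
      case (elim \<theta>)
      show ?case
        using nn_integral_ray_eq_radial_integral[OF sb continuous_on_const one0 n elim]
        by (simp only: radial_integral_const_one[OF n])
    qed
  qed
  also have "\<dots> = ennreal (\<integral>\<theta>. radial_function K \<theta> ^ ?n / ?n \<partial>?\<sigma>)"
    using integrable_radial_function_power[OF sb, of ?n ?n] nonneg by (intro nn_integral_eq_integral) auto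
  finally show ?thesis
    using integral_nonneg_AE[OF nonneg] by (simp add: measure_def)
qed

lemma nn_integral_ray_le_radial_integral:
  fixes K :: "(real^'n) set" and f :: "real^'n \<Rightarrow> real"
  assumes sb: "star_body K" and fc: "continuous_on K f" and f0: "\<And>x. x \<in> K \<Longrightarrow> f x \<ge> 0"
    and km: "k + m = n" and m: "m \<ge> 1" and \<theta>: "\<theta> \<in> sphere 0 1"
  shows "(\<integral>\<^sup>+r. ennreal (r^(n-1)) * indicator {0<..} r * ennreal (indicator K (r *\<^sub>R \<theta>) * f (r *\<^sub>R \<theta>)) \<partial>lborel)
    \<le> ennreal (radial_function K \<theta> ^ k * radial_integral K f m \<theta>)"
proof -
  let ?\<rho> = "radial_function K \<theta>"
  let ?F = "\<lambda>r. ennreal (r^(m-1)) * indicator {0<..} r * ennreal (indicator K (r *\<^sub>R \<theta>) * f (r *\<^sub>R \<theta>))"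
  have \<theta>0: "\<theta> \<noteq> 0" using \<theta> by auto
  have mk: "minkowski_functional K \<theta> > 0" by (rule minkowski_functional_pos[OF sb \<theta>0])
  then have \<rho>: "?\<rho> > 0" by (simp add: radial_function_def)
  have n1: "n - 1 = k + (m - 1)" using km m by simp
  have fKm: "(\<lambda>x. indicator K x * f x) \<in> borel_measurable borel"
    by (rule borel_measurable_indicator_mult[OF star_body_closed[OF sb] fc])
  have [measurable]: "(\<lambda>r. indicator K (r *\<^sub>R \<theta>) * f (r *\<^sub>R \<theta>)) \<in> borel_measurable (borel :: real measure)"
    by (rule measurable_compose[OF _ fKm]) measurable
  have "(\<integral>\<^sup>+r. ennreal (r^(n-1)) * indicator {0<..} r * ennreal (indicator K (r *\<^sub>R \<theta>) * f (r *\<^sub>R \<theta>)) \<partial>lborel)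
      \<le> (\<integral>\<^sup>+r. ennreal (?\<rho> ^ k) * ?F r \<partial>lborel)"
  proof (rule nn_integral_mono)
    fix r :: real
    show "ennreal (r^(n-1)) * indicator {0<..} r * ennreal (indicator K (r *\<^sub>R \<theta>) * f (r *\<^sub>R \<theta>))
        \<le> ennreal (?\<rho> ^ k) * ?F r"
    proof (cases "r > 0 \<and> r *\<^sub>R \<theta> \<in> K")
      case True
      then have "r * minkowski_functional K \<theta> \<le> 1" using star_body_scaleR_mem_iff[OF sb \<theta>0, of r] by simp
      then have "r \<le> ?\<rho>" using mk by (simp add: radial_function_def field_simps)
      then have "r^(n-1) \<le> ?\<rho> ^ k * r^(m-1)"
        unfolding n1 power_add using True by (intro mult_right_mono power_mono) auto
      then have "r^(n-1) * f (r *\<^sub>R \<theta>) \<le> ?\<rho> ^ k * r^(m-1) * f (r *\<^sub>R \<theta>)"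
        using f0[of "r *\<^sub>R \<theta>"] True by (intro mult_right_mono) auto
      then show ?thesis
        using True f0[of "r *\<^sub>R \<theta>"] \<rho> by (simp add: ennreal_mult[symmetric] ennreal_leI mult.assoc)
    qed (auto simp: indicator_def)
  qed
  also have "\<dots> = ennreal (?\<rho> ^ k) * (\<integral>\<^sup>+r. ?F r \<partial>lborel)"
    by (rule nn_integral_cmult) measurable
  also have "\<dots> = ennreal (?\<rho> ^ k * radial_integral K f m \<theta>)"
    using nn_integral_ray_eq_radial_integral[OF sb fc f0 m \<theta>] \<rho> radial_integral_nonneg[OF sb fc f0 \<theta>, of m]
    by (simp add: ennreal_mult)
  finally show ?thesis .
qed

lemma integrable_minkowski_functional_powr_radial_integral:
  fixes K :: "(real^'n) set" and f :: "real^'n \<Rightarrow> real"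
  assumes sb: "star_body K" and fc: "continuous_on K f"
  shows "integrable (sphere_measure CARD('n) lborel)
    (\<lambda>\<theta>. minkowski_functional K \<theta> powr (- real k) * (indicator (sphere 0 1) \<theta> * radial_integral K f m \<theta>))"
    (is "integrable ?\<sigma> ?h")
proof -
  interpret finite_measure ?\<sigma> by (rule finite_measure_sphere_measure_lborel)
  have [measurable]: "minkowski_functional K \<in> borel_measurable borel"
    by (rule borel_measurable_continuous_onI[OF star_body_continuous_minkowski[OF sb]])
  have [measurable]: "(\<lambda>\<theta>. indicator (sphere 0 1) \<theta> * radial_integral K f m \<theta>) \<in> borel_measurable borel"
    using borel_measurable_continuous_on_indicator[OF _ continuous_on_radial_integral[OF sb fc]] by simp
  obtain d R where dR: "0 < d" "\<And>\<theta>. \<theta> \<in> sphere 0 1 \<Longrightarrow> d \<le> radial_function K \<theta> \<and> radial_function K \<theta> \<le> R"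
    using radial_function_bounds[OF sb] by blast
  obtain B where B: "\<And>\<theta>. \<theta> \<in> sphere 0 1 \<Longrightarrow> norm (radial_integral K f m \<theta>) \<le> B"
  proof -
    have "compact (radial_integral K f m ` sphere 0 1)"
      by (intro compact_continuous_image continuous_on_radial_integral[OF sb fc]) simp
    then obtain a where "\<forall>\<theta>\<in>sphere 0 1. norm (radial_integral K f m \<theta>) \<le> a"
      by (auto dest!: compact_imp_bounded simp: bounded_iff)
    then show ?thesis using that by blast
  qed
  show ?thesis
  proof (rule integrable_const_bound[where B="R ^ k * B"])
    show "AE \<theta> in ?\<sigma>. norm (?h \<theta>) \<le> R ^ k * B"
      using AE_sphere_measure_lborel
    proof eventually_elim
      case (elim \<theta>)
      then have "\<theta> \<noteq> 0" "0 \<le> radial_function K \<theta>" using dR(1) dR(2)[OF elim] by auto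
      then show ?case
        using elim dR(2)[OF elim] B[OF elim]
        by (simp add: minkowski_functional_powr_eq_radial_function[OF sb] abs_mult norm_power)
          (intro mult_mono power_mono, auto)
    qed
  qed measurable
qed

lemma set_integral_le_sphere_integral:
  fixes K :: "(real^'n) set" and f :: "real^'n \<Rightarrow> real"
  assumes sb: "star_body K" and fc: "continuous_on K f" and f0: "\<And>x. x \<in> K \<Longrightarrow> f x \<ge> 0"
    and km: "k + m = CARD('n)" and m: "m \<ge> 1"
  shows "(\<integral>x\<in>K. f x \<partial>lborel) \<le> (\<integral>\<theta>. minkowski_functional K \<theta> powr (- real k) *
      (indicator (sphere 0 1) \<theta> * radial_integral K f m \<theta>) \<partial>sphere_measure CARD('n) lborel)"
proof -
  let ?\<sigma> = "sphere_measure CARD('n) (lborel :: (real^'n) measure)"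
  let ?h = "\<lambda>\<theta>. minkowski_functional K \<theta> powr (- real k) * (indicator (sphere 0 1) \<theta> * radial_integral K f m \<theta>)"
  have h_sphere: "?h \<theta> = radial_function K \<theta> ^ k * radial_integral K f m \<theta>" if "\<theta> \<in> sphere 0 1" for \<theta>
  proof -
    have "\<theta> \<noteq> 0" using that by auto
    then show ?thesis using that minkowski_functional_powr_eq_radial_function[OF sb] by simp
  qed
  have h0: "?h \<theta> \<ge> 0" for \<theta>
    using radial_integral_nonneg[OF sb fc f0, of \<theta> m] by (simp add: indicator_def)
  have integral_h: "(\<integral>\<^sup>+\<theta>. ennreal (?h \<theta>) \<partial>?\<sigma>) = ennreal (\<integral>\<theta>. ?h \<theta> \<partial>?\<sigma>)"
    using integrable_minkowski_functional_powr_radial_integral[OF sb fc]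
    by (rule nn_integral_eq_integral) (simp add: h0)
  have fKm[measurable]: "(\<lambda>x. indicator K x * f x) \<in> borel_measurable borel"
    by (rule borel_measurable_indicator_mult[OF star_body_closed[OF sb] fc])
  have fKm': "(\<lambda>x. ennreal (indicator K x * f x)) \<in> borel_measurable borel" by measurable
  have "(\<integral>\<^sup>+x. ennreal (indicator K x * f x) \<partial>lborel) \<le> (\<integral>\<^sup>+\<theta>. ennreal (?h \<theta>) \<partial>?\<sigma>)"
    unfolding nn_integral_lborel_polar[OF fKm']
  proof (rule nn_integral_mono_AE)
    show "AE \<theta> in ?\<sigma>. (\<integral>\<^sup>+r. ennreal (r^(CARD('n)-1)) * indicator {0<..} r *
        ennreal (indicator K (r *\<^sub>R \<theta>) * f (r *\<^sub>R \<theta>)) \<partial>lborel) \<le> ennreal (?h \<theta>)"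
      using AE_sphere_measure_lborel
      by eventually_elim (simp only: h_sphere nn_integral_ray_le_radial_integral[OF sb fc f0 km m])
  qed
  then have "enn2real (\<integral>\<^sup>+x. ennreal (indicator K x * f x) \<partial>lborel) \<le> (\<integral>\<theta>. ?h \<theta> \<partial>?\<sigma>)"
    unfolding integral_h by (simp add: enn2real_leI integral_nonneg h0)
  moreover have "(\<integral>x\<in>K. f x \<partial>lborel) = enn2real (\<integral>\<^sup>+x. ennreal (indicator K x * f x) \<partial>lborel)"
    unfolding set_lebesgue_integral_def real_scaleR_def
  proof (rule integral_eq_nn_integral)
    show "(\<lambda>x. indicator K x * f x) \<in> borel_measurable lborel" using fKm by simp
  qed (auto simp: indicator_def f0)
  ultimately show ?thesis by simp
qed

lemma integral_radial_function_power_Holder: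
  fixes K :: "(real^'n) set"
  assumes sb: "star_body K" and k: "0 < k" "k < CARD('n)"
  shows "(\<integral>\<theta>. radial_function K \<theta> ^ k \<partial>sphere_measure CARD('n) lborel)
    \<le> (\<integral>\<theta>. radial_function K \<theta> ^ CARD('n) \<partial>sphere_measure CARD('n) lborel) powr (real k / CARD('n))
      * (CARD('n) * unit_ball_vol CARD('n)) powr (real (CARD('n) - k) / CARD('n))"
proof -
  obtain d R where dR: "0 < d" "\<And>\<theta>. \<theta> \<in> sphere 0 1 \<Longrightarrow> d \<le> radial_function K \<theta> \<and> radial_function K \<theta> \<le> R"
    using radial_function_bounds[OF sb] by blast
  have bounds: "AE \<theta> in sphere_measure CARD('n) lborel. d \<le> radial_function K \<theta> \<and> radial_function K \<theta> \<le> R"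
    using AE_sphere_measure_lborel by eventually_elim (rule dR(2))
  have measure: "measure (sphere_measure CARD('n) (lborel :: (real^'n) measure)) (space (sphere_measure CARD('n) lborel))
      = CARD('n) * unit_ball_vol CARD('n)"
    using measure_sphere_measure_lborel by simp
  show ?thesis
    unfolding measure[symmetric]
    by (rule integral_power_Holder[OF finite_measure_sphere_measure_lborel _ bounds dR(1) k])
      (use measure borel_measurable_radial_function[OF sb] in
        \<open>simp_all add: measurable_cong_sets[OF sets_sphere_measure refl]\<close>)
qed

lemma Holder_constant_eq_c_const:
  fixes V :: real and k m n :: nat
  assumes k: "0 < k" and km: "k + m = n" and V: "V \<ge> 0"
  shows "(real n * V) powr (real k / real n) * (real n * unit_ball_vol (real n)) powr (real m / real n)
      / (real m * unit_ball_vol (real m))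
    = real n / real m * c_const n k * V powr (real k / real n)"
proof -
  have kmn: "real k + real m = real n" using km by simp
  have "real n > 0" using k km by simp
  then have "real n powr (real k / real n) * real n powr (real m / real n) = n"
    by (simp add: powr_add[symmetric] add_divide_distrib[symmetric] kmn)
  then have "(real n * V) powr (real k / real n) * (real n * unit_ball_vol (real n)) powr (real m / real n)
      = n * (V powr (real k / real n) * unit_ball_vol (real n) powr (real m / real n))"
    using V by (simp add: powr_mult mult_ac)
  moreover have "n - k = m" using km by simp
  ultimately show ?thesis by (simp add: c_const_def)
qed

lemma continuous_on_indicator_sphere: "continuous_on (sphere 0 1) (indicator (sphere (0::real^'n) 1) :: _ \<Rightarrow> real)"
  using continuous_on_const[of "sphere 0 1" "1::real"]
  by (rule continuous_on_cong[THEN iffD1, rotated 2]) auto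

lemma integral_minkowski_functional_powr_sphere:
  fixes K :: "(real^'n) set"
  assumes sb: "star_body K"
  shows "(\<integral>\<theta>. minkowski_functional K \<theta> powr (- real k) * indicator (sphere 0 1) \<theta> \<partial>sphere_measure CARD('n) lborel)
    = (\<integral>\<theta>. radial_function K \<theta> ^ k \<partial>sphere_measure CARD('n) lborel)"
proof (rule integral_cong_AE)
  let ?\<sigma> = "sphere_measure CARD('n) (lborel :: (real^'n) measure)"
  show "AE \<theta> in ?\<sigma>. minkowski_functional K \<theta> powr (- real k) * indicator (sphere 0 1) \<theta>
      = radial_function K \<theta> ^ k"
    using AE_sphere_measure_lborel
  proof eventually_elim
    case (elim \<theta>)
    then have "\<theta> \<noteq> 0" by auto
    then show ?case using elim by (simp add: minkowski_functional_powr_eq_radial_function[OF sb])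
  qed
  have [measurable]: "minkowski_functional K \<in> borel_measurable borel"
    by (rule borel_measurable_continuous_onI[OF star_body_continuous_minkowski[OF sb]])
  have [measurable]: "radial_function K \<in> borel_measurable borel"
    by (rule borel_measurable_radial_function[OF sb])
  have [measurable]: "sphere (0::real^'n) 1 \<in> sets borel" by (simp add: borel_closed)
  show "(\<lambda>\<theta>. radial_function K \<theta> ^ k) \<in> borel_measurable ?\<sigma>" by measurable
  show "(\<lambda>\<theta>. minkowski_functional K \<theta> powr (- real k) * indicator (sphere 0 1) \<theta>) \<in> borel_measurable ?\<sigma>"
    by measurable
qed

lemma integral_radial_function_power_pos:
  fixes K :: "(real^'n) set"
  assumes sb: "star_body K"
  shows "(\<integral>\<theta>. radial_function K \<theta> ^ k \<partial>sphere_measure CARD('n) lborel) > 0"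
proof -
  let ?\<sigma> = "sphere_measure CARD('n) (lborel :: (real^'n) measure)"
  obtain d R where dR: "0 < d" "\<And>\<theta>. \<theta> \<in> sphere 0 1 \<Longrightarrow> d \<le> radial_function K \<theta> \<and> radial_function K \<theta> \<le> R"
    using radial_function_bounds[OF sb] by blast
  interpret finite_measure ?\<sigma> by (rule finite_measure_sphere_measure_lborel)
  have "(\<integral>\<theta>. d ^ k \<partial>?\<sigma>) \<le> (\<integral>\<theta>. radial_function K \<theta> ^ k \<partial>?\<sigma>)"
  proof (rule integral_mono_AE)
    show "AE \<theta> in ?\<sigma>. d ^ k \<le> radial_function K \<theta> ^ k"
      using AE_sphere_measure_lborel
      by eventually_elim (use dR in \<open>auto intro!: power_mono\<close>)
  qed (auto intro: integrable_radial_function_power[OF sb])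
  moreover have "(\<integral>\<theta>. d ^ k \<partial>?\<sigma>) > 0"
    using dR(1) measure_sphere_measure_lborel[where 'n='n] by simp
  ultimately show ?thesis by linarith
qed

lemma measure_space_intersection_measure:
  fixes K :: "(real^'n) set" and \<nu> :: "(real^'n^'n) measure"
  assumes sb: "star_body K" and \<nu>: "finite_measure \<nu>" and AE_G: "AE P in \<nu>. P \<in> grassmannian_proj m"
    and m: "m \<ge> 1"
    and identity: "(\<integral>\<theta>. minkowski_functional K \<theta> powr (- real k) * indicator (sphere 0 1) \<theta> \<partial>sphere_measure CARD('n) lborel)
      = (\<integral>P. spherical_radon (indicator (sphere 0 1)) (proj_subspace P) \<partial>\<nu>)"
  shows "measure \<nu> (space \<nu>) * (m * unit_ball_vol m)
    = (\<integral>\<theta>. radial_function K \<theta> ^ k \<partial>sphere_measure CARD('n) lborel)"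
proof -
  let ?R = "\<lambda>P. spherical_radon (indicator (sphere 0 1)) (proj_subspace P) :: real"
  interpret finite_measure \<nu> by (rule \<nu>)
  have R: "AE P in \<nu>. ?R P = m * unit_ball_vol m"
    using AE_G
  proof eventually_elim
    case (elim P)
    have "subspace (proj_subspace P)" "dim (proj_subspace P) = m"
      by (rule proj_subspace_grassmannian_proj[OF elim])+
    then show ?case using spherical_radon_indicator_sphere[of "proj_subspace P"] m by simp
  qed
  have I: "(\<integral>\<theta>. radial_function K \<theta> ^ k \<partial>sphere_measure CARD('n) lborel) = (\<integral>P. ?R P \<partial>\<nu>)"
    using identity integral_minkowski_functional_powr_sphere[OF sb] by simp
  then have "integrable \<nu> ?R"
    using integral_radial_function_power_pos[OF sb, of k] not_integrable_integral_eq[of \<nu> ?R] by fastforce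
  then have "(\<integral>P. ?R P \<partial>\<nu>) = (\<integral>P. m * unit_ball_vol m \<partial>\<nu>)"
    using R by (intro integral_cong_AE) auto
  then show ?thesis using I by (simp add: mult.commute)
qed

lemma measure_space_intersection_measure_le:
  fixes K :: "(real^'n) set" and \<nu> :: "(real^'n^'n) measure"
  assumes sb: "star_body K" and \<nu>: "finite_measure \<nu>" and AE_G: "AE P in \<nu>. P \<in> grassmannian_proj m"
    and k: "0 < k" and m: "m \<ge> 1" and km: "k + m = CARD('n)"
    and identity: "(\<integral>\<theta>. minkowski_functional K \<theta> powr (- real k) * indicator (sphere 0 1) \<theta> \<partial>sphere_measure CARD('n) lborel)
      = (\<integral>P. spherical_radon (indicator (sphere 0 1)) (proj_subspace P) \<partial>\<nu>)"
  shows "measure \<nu> (space \<nu>) \<le> CARD('n) / m * c_const CARD('n) k * measure lborel K powr (real k / CARD('n))"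
proof -
  let ?n = "CARD('n)"
  have kn: "0 < k" "k < ?n" using k m km by auto
  have nk: "?n - k = m" using km by simp
  have "unit_ball_vol (real m) > 0" by (rule unit_ball_vol_pos) simp
  then have pos: "real m * unit_ball_vol (real m) > 0" using m by simp
  have I_n: "(\<integral>\<theta>. radial_function K \<theta> ^ ?n \<partial>sphere_measure ?n lborel) = ?n * measure lborel K"
    using measure_star_body_polar[OF sb] by simp
  have "measure \<nu> (space \<nu>) * (real m * unit_ball_vol (real m))
      \<le> (?n * measure lborel K) powr (real k / ?n) * (?n * unit_ball_vol ?n) powr (real m / ?n)"
    using measure_space_intersection_measure[OF sb \<nu> AE_G m identity]
      integral_radial_function_power_Holder[OF sb kn] by (simp add: nk I_n)
  then have "measure \<nu> (space \<nu>) \<le> (?n * measure lborel K) powr (real k / ?n) * (?n * unit_ball_vol ?n) powr (real m / ?n)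
      / (real m * unit_ball_vol (real m))"
    using pos by (simp add: le_divide_eq)
  then show ?thesis unfolding Holder_constant_eq_c_const[OF k km measure_nonneg] .
qed

theorem theorem1:
  fixes K :: "(real^'n) set" and f :: "real^'n \<Rightarrow> real" and k :: nat and \<epsilon> :: real
  assumes "CARD('n) \<ge> 2" and "1 \<le> k" and "k \<le> CARD('n) - 1"
    and "generalized_k_intersection_body k K"
    and "continuous_on K f" and "\<forall>x\<in>K. f (- x) = f x" and "\<forall>x\<in>K. f x \<ge> 0"
    and "\<epsilon> > 0"
    and "\<forall>H\<in>grassmannian (CARD('n) - k).
           (\<integral>x\<in>K \<inter> H. f x \<partial>subspace_lebesgue H) \<le> \<epsilon>"
  shows "(\<integral>x\<in>K. f x \<partial>lborel)
           \<le> real CARD('n) / real (CARD('n) - k) * c_const CARD('n) k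
              * measure lborel K powr (real k / real CARD('n)) * \<epsilon>"
proof -
  let ?n = "CARD('n)"
  let ?\<sigma> = "sphere_measure ?n (lborel :: (real^'n) measure)"
  define m where "m = ?n - k"
  have m: "m \<ge> 1" "k + m = ?n" and k: "0 < k" using assms(1-3) by (auto simp: m_def)
  have f0: "\<And>x. x \<in> K \<Longrightarrow> f x \<ge> 0" using assms(7) by blast
  obtain \<nu> :: "(real^'n^'n) measure" where sb: "star_body K"
    and \<nu>: "sets \<nu> = sets borel" "finite_measure \<nu>" "emeasure \<nu> (UNIV - grassmannian_proj m) = 0"
    and identity: "\<And>g. continuous_on (sphere 0 1) g \<Longrightarrow>
      (\<integral>x. minkowski_functional K x powr (- real k) * g x \<partial>?\<sigma>) = (\<integral>P. spherical_radon g (proj_subspace P) \<partial>\<nu>)"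
    using assms(4) unfolding generalized_k_intersection_body_def m_def by blast
  have AE_G: "AE P in \<nu>. P \<in> grassmannian_proj m" by (rule AE_grassmannian_proj[OF \<nu>(1,3)])
  define g where "g \<theta> = indicator (sphere 0 1) \<theta> * radial_integral K f m \<theta>" for \<theta>
  have "continuous_on (sphere 0 1) g"
    using continuous_on_radial_integral[OF sb assms(5), of m]
    by (rule continuous_on_cong[THEN iffD1, rotated 2]) (auto simp: g_def)
  have radon: "spherical_radon g (proj_subspace P) \<le> \<epsilon>" if "P \<in> grassmannian_proj m" for P
    using spherical_radon_radial_integral[OF sb assms(5) f0 proj_subspace_grassmannian_proj(1)[OF that]]
      proj_subspace_grassmannian_proj[OF that] assms(9) m(1)
    by (simp add: g_def[abs_def] grassmannian_def m_def)
  have "(\<integral>x\<in>K. f x \<partial>lborel) \<le> (\<integral>\<theta>. minkowski_functional K \<theta> powr (- real k) * g \<theta> \<partial>?\<sigma>)"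
    unfolding g_def by (rule set_integral_le_sphere_integral[OF sb assms(5) f0 m(2,1)])
  also have "\<dots> = (\<integral>P. spherical_radon g (proj_subspace P) \<partial>\<nu>)"
    by (rule identity) fact
  also have "\<dots> \<le> \<epsilon> * measure \<nu> (space \<nu>)"
    using AE_G assms(8) by (intro integral_le_const_mult_measure[OF \<nu>(2)]) (auto elim!: eventually_mono radon)
  also have "\<dots> \<le> \<epsilon> * (?n / m * c_const ?n k * measure lborel K powr (real k / ?n))"
    using measure_space_intersection_measure_le[OF sb \<nu>(2) AE_G k m(1,2) identity[OF continuous_on_indicator_sphere]]
      assms(8) by (intro mult_left_mono) auto
  finally show ?thesis unfolding m_def by (simp add: ac_simps)
qed

end
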